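(* Let $X$ be a locally convex space, let $T:X\rightrightarrows X^{*}$, and let $V\subset X$ be open and convex with $D(T)\cap V\neq\emptyset$ and $T|_{V}\in\mathcal{M}(X)$. If $T$ is $V$-NI, then $\varphi_{T|_{V}}\ge c$ on $\overline{V}\times X^{*}$; in particular, $T$ is $S$-NI for every $S$ with $V\subset S\subset\overline{V}$. If, in addition, $T$ is $\overline{V}$-representable, then \[[\varphi_{T|_{V}}\le c]\cap(\overline{V}\times X^{*})\subset T+N_{\overline{V}}\subset D(T)\times X^{*},\] and in particular, for every $S$ with $V\subset S\subset\overline{V}$, $S$ locates $T$ and $S$ identifies $T+N_{\overline{V}}$.
   Context: $(X,\tau)$ is a non-trivial Hausdorff locally convex space, $X^*$ its dual with weak-star topology $\omega^*$, $Z=X\times X^*$ with topology $\tau\times\omega^*$, $c(x,x^* )=\langle x,x^*\rangle$. Operators are identified with their graphs; $D(T)$ is the domain; $T|_V$ has graph $\operatorname{Graph}T\cap(V\times X^* )$; $\overline V$ is the closure. $N_C(x)=\{x^*\mid\langle y-x,x^*\rangle\le0\ \forall y\in C\}$ for $x\in C$, $\emptyset$ otherwise; $(T+N_C)(x)=Tx+N_C(x)$. $\varphi_{T}(x,x^{*})=\sup\{\langle x,u^{*}\rangle+\langle u,x^{*}\rangle-\langle u,u^{*}\rangle\mid(u,u^{*})\in T\}$ ($\sup\emptyset=-\infty$); $[f\le g]=\{z\mid f(z)\le g(z)\}$. $\mathcal M(X)$: monotone operators with non-empty graph. $T$ is $W$-representable if $W\cap D(T)\ne\emptyset$ and there is a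 proper convex $\tau\times\omega^*$-lsc $h\ge c$ with $\{z\in W\times X^*\mid h(z)=c(z)\}=\operatorname{Graph}(T|_W)$. $S$ locates $T$ if $\operatorname{Pr}_X([\varphi_{T|_S}\le c])\cap S\subset D(T)$; $S$ identifies $R$ if $[\varphi_{R|_S}\le c]\cap(S\times X^* )\subset\operatorname{Graph}R$; $T$ is $S$-NI if $\varphi_{T|_S}\ge c$ on $S\times X^*$. *)

theory Defs
  imports "HOL-Analysis.Analysis"
begin

definition lcs :: "'a::real_vector topology \<Rightarrow> bool" where
  "lcs \<tau> \<longleftrightarrow> topspace \<tau> = UNIV \<and> Hausdorff_space \<tau>
     \<and> continuous_map (prod_topology \<tau> \<tau>) \<tau> (\<lambda>(x, y). x + y)
     \<and> continuous_map (prod_topology euclideanreal \<tau>) \<tau> (\<lambda>(a, x). a *\<^sub>R x)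
     \<and> (\<forall>U x. openin \<tau> U \<and> x \<in> U \<longrightarrow> (\<exists>W. openin \<tau> W \<and> convex W \<and> x \<in> W \<and> W \<subseteq> U))
     \<and> (\<exists>x::'a. x \<noteq> 0)"

definition dual :: "'a::real_vector topology \<Rightarrow> ('a \<Rightarrow> real) set" where
  "dual \<tau> = {f. linear f \<and> continuous_map \<tau> euclideanreal f}"

definition wstar :: "'a::real_vector topology \<Rightarrow> ('a \<Rightarrow> real) topology" where
  "wstar \<tau> = subtopology (powertop_real UNIV) (dual \<tau>)"

definition Ztop :: "'a::real_vector topology \<Rightarrow> ('a \<times> ('a \<Rightarrow> real)) topology" where
  "Ztop \<tau> = prod_topology \<tau> (wstar \<tau>)"

definition cpl :: "'a \<times> ('a \<Rightarrow> real) \<Rightarrow> real" where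
  "cpl z = snd z (fst z)"

text \<open>Operators are identified with graphs; T is an operator X \<rightrightarrows> X*.\<close>
definition operator :: "'a::real_vector topology \<Rightarrow> ('a \<times> ('a \<Rightarrow> real)) set \<Rightarrow> bool" where
  "operator \<tau> T \<longleftrightarrow> T \<subseteq> UNIV \<times> dual \<tau>"

definition dom_op :: "('a \<times> 'b) set \<Rightarrow> 'a set" where
  "dom_op T = fst ` T"

definition restr :: "('a \<times> 'b) set \<Rightarrow> 'a set \<Rightarrow> ('a \<times> 'b) set" where
  "restr T V = T \<inter> (V \<times> UNIV)"

definition monotone_op :: "('a::real_vector \<times> ('a \<Rightarrow> real)) set \<Rightarrow> bool" where
  "monotone_op T \<longleftrightarrow> (\<forall>(x, u) \<in> T. \<forall>(y, v) \<in> T. 0 \<le> u (x - y) - v (x - y))"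

definition MX :: "'a::real_vector topology \<Rightarrow> ('a \<times> ('a \<Rightarrow> real)) set set" where
  "MX \<tau> = {T. operator \<tau> T \<and> monotone_op T \<and> T \<noteq> {}}"

text \<open>Fitzpatrick function (sup of empty set is -\<infinity>).\<close>
definition fitz :: "('a::real_vector \<times> ('a \<Rightarrow> real)) set \<Rightarrow> 'a \<times> ('a \<Rightarrow> real) \<Rightarrow> ereal" where
  "fitz T z = (SUP p \<in> T. ereal (snd p (fst z) + snd z (fst p) - snd p (fst p)))"

definition le_c :: "'a::real_vector topology \<Rightarrow> ('a \<times> ('a \<Rightarrow> real) \<Rightarrow> ereal) \<Rightarrow> ('a \<times> ('a \<Rightarrow> real)) set" where
  "le_c \<tau> f = {z \<in> UNIV \<times> dual \<tau>. f z \<le> ereal (cpl z)}"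

definition normal_cone :: "'a::real_vector topology \<Rightarrow> 'a set \<Rightarrow> ('a \<times> ('a \<Rightarrow> real)) set" where
  "normal_cone \<tau> C = {(x, u). x \<in> C \<and> u \<in> dual \<tau> \<and> (\<forall>y \<in> C. u (y - x) \<le> 0)}"

definition op_sum :: "('a \<times> ('a \<Rightarrow> real)) set \<Rightarrow> ('a \<times> ('a \<Rightarrow> real)) set \<Rightarrow> ('a \<times> ('a \<Rightarrow> real)) set" where
  "op_sum T N = {(x, \<lambda>y. u y + v y) | x u v. (x, u) \<in> T \<and> (x, v) \<in> N}"

definition proper_on :: "'a::real_vector topology \<Rightarrow> ('a \<times> ('a \<Rightarrow> real) \<Rightarrow> ereal) \<Rightarrow> bool" where
  "proper_on \<tau> h \<longleftrightarrow> (\<forall>z \<in> UNIV \<times> dual \<tau>. h z \<noteq> -\<infinity>) \<and> (\<exists>z \<in> UNIV \<times> dual \<tau>. h z \<noteq> \<infinity>)"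

definition convex_on_Z :: "'a::real_vector topology \<Rightarrow> ('a \<times> ('a \<Rightarrow> real) \<Rightarrow> ereal) \<Rightarrow> bool" where
  "convex_on_Z \<tau> h \<longleftrightarrow> (\<forall>x u y v (t::real). u \<in> dual \<tau> \<and> v \<in> dual \<tau> \<and> 0 \<le> t \<and> t \<le> 1 \<longrightarrow>
      h (t *\<^sub>R x + (1 - t) *\<^sub>R y, \<lambda>a. t * u a + (1 - t) * v a)
        \<le> ereal t * h (x, u) + ereal (1 - t) * h (y, v))"

definition lsc_on_Z :: "'a::real_vector topology \<Rightarrow> ('a \<times> ('a \<Rightarrow> real) \<Rightarrow> ereal) \<Rightarrow> bool" where
  "lsc_on_Z \<tau> h \<longleftrightarrow> (\<forall>t::real. closedin (Ztop \<tau>) {z \<in> topspace (Ztop \<tau>). h z \<le> ereal t})"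

definition representable :: "'a::real_vector topology \<Rightarrow> 'a set \<Rightarrow> ('a \<times> ('a \<Rightarrow> real)) set \<Rightarrow> bool" where
  "representable \<tau> W T \<longleftrightarrow> W \<inter> dom_op T \<noteq> {} \<and>
     (\<exists>h. proper_on \<tau> h \<and> convex_on_Z \<tau> h \<and> lsc_on_Z \<tau> h
        \<and> (\<forall>z \<in> UNIV \<times> dual \<tau>. ereal (cpl z) \<le> h z)
        \<and> {z \<in> W \<times> dual \<tau>. h z = ereal (cpl z)} = restr T W)"

definition locates :: "'a::real_vector topology \<Rightarrow> 'a set \<Rightarrow> ('a \<times> ('a \<Rightarrow> real)) set \<Rightarrow> bool" where
  "locates \<tau> S T \<longleftrightarrow> fst ` le_c \<tau> (fitz (restr T S)) \<inter> S \<subseteq> dom_op T"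

definition identifies :: "'a::real_vector topology \<Rightarrow> 'a set \<Rightarrow> ('a \<times> ('a \<Rightarrow> real)) set \<Rightarrow> bool" where
  "identifies \<tau> S R \<longleftrightarrow> le_c \<tau> (fitz (restr R S)) \<inter> (S \<times> dual \<tau>) \<subseteq> R"

definition NI :: "'a::real_vector topology \<Rightarrow> 'a set \<Rightarrow> ('a \<times> ('a \<Rightarrow> real)) set \<Rightarrow> bool" where
  "NI \<tau> S T \<longleftrightarrow> (\<forall>z \<in> S \<times> dual \<tau>. ereal (cpl z) \<le> fitz (restr T S) z)"

end

theory Submission
  imports Defs "HOL-Library.Function_Algebras"
begin

text \<open>
  Along a segment from a point \<open>x\<close> of the closure of \<open>V\<close> into \<open>V\<close>, the coupling of the interpolated
  pairs is a quadratic polynomial in the parameter, whereas the Fitzpatrick function \<open>\<phi>\<close> of \<open>T|\<^sub>V\<close>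
  is convex and dominates the coupling on \<open>V\<close>. Letting the parameter tend to \<open>0\<close> gives
  \<open>\<phi> \<ge> c\<close> at \<open>x\<close>; at a point \<open>(x0, x0*)\<close> of \<open>[\<phi> \<le> c]\<close> over the closure, the first-order
  term shows that \<open>\<phi>(y, y*) \<ge> \<langle>y - x0, x0*\<rangle> + \<langle>x0, y*\<rangle>\<close> for \<open>y \<in> V\<close>. Separating the strict
  epigraph of the remaining slack from \<open>(V - x0) \<times> (-\<infinity>, 0)\<close> yields a continuous \<open>n\<close>, normal to
  the closure of \<open>V\<close> at \<open>x0\<close>, for which the same bound holds everywhere with \<open>x0* - n\<close> in place of
  \<open>x0*\<close>. A representative \<open>h\<close> of \<open>T\<close> lies below the conjugate of \<open>\<phi>\<close>, by separating its
  epigraph in \<open>X \<times> X* \<times> \<real>\<close>, whose continuous functionals pair with \<open>X* \<times> X\<close>. Hence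
  \<open>h(x0, x0* - n) \<le> c(x0, x0* - n)\<close>, so \<open>(x0, x0* - n) \<in> T\<close> and \<open>x0* \<in> (T + N)(x0)\<close>.
  All separations are algebraic: Hahn--Banach via Zorn's lemma, applied to Minkowski functionals.
\<close>

section \<open>Sublinear functionals and algebraic separation\<close>

definition sublinear :: "('b::real_vector \<Rightarrow> real) \<Rightarrow> bool" where
  "sublinear p \<longleftrightarrow> (\<forall>x y. p (x + y) \<le> p x + p y) \<and> (\<forall>t x. 0 \<le> t \<longrightarrow> p (t *\<^sub>R x) = t * p x)"

lemma sublinear_add: "sublinear p \<Longrightarrow> p (x + y) \<le> p x + p y"
  by (simp add: sublinear_def)

lemma sublinear_scaleR: "sublinear p \<Longrightarrow> 0 \<le> t \<Longrightarrow> p (t *\<^sub>R x) = t * p x"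
  by (simp add: sublinear_def)

lemma sublinear_0: "sublinear p \<Longrightarrow> p 0 = 0"
  using sublinear_scaleR[of p 0 0] by simp

lemma sublinear_uminus_ge: "sublinear p \<Longrightarrow> - p (- x) \<le> p x"
  using sublinear_add[of p x "- x"] sublinear_0[of p] by simp

lemma sublinearI:
  assumes add: "\<And>x y. p (x + y) \<le> p x + p y"
    and scale: "\<And>t x. 0 < t \<Longrightarrow> p (t *\<^sub>R x) \<le> t * p x"
    and zero: "p 0 \<le> 0"
  shows "sublinear p"
proof -
  have "p (t *\<^sub>R x) = t * p x" if "0 < t" for t x
  proof (rule antisym)
    have "p x = p (inverse t *\<^sub>R (t *\<^sub>R x))" using that by simp
    also have "\<dots> \<le> inverse t * p (t *\<^sub>R x)" using that by (intro scale) simp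
    finally show "t * p x \<le> p (t *\<^sub>R x)" using that by (simp add: field_simps)
  qed (use scale that in blast)
  moreover have "p 0 = 0" using add[of 0 0] zero by simp
  ultimately show ?thesis
    unfolding sublinear_def using add by (metis order_le_less scaleR_zero_left mult_zero_left)
qed

lemma sublinear_odd_imp_linear:
  assumes p: "sublinear p" and odd: "\<And>y. p (- y) \<le> - p y"
  shows "linear p"
proof (rule linearI)
  have uminus: "p (- y) = - p y" for y
    using odd[of y] sublinear_uminus_ge[OF p, of y] by linarith
  show "p (x + y) = p x + p y" for x y
    using sublinear_add[OF p, of "x + y" "- y"] sublinear_add[OF p, of x y] uminus[of y] by simp
  show "p (t *\<^sub>R x) = t *\<^sub>R p x" for t x
  proof (cases "0 \<le> t")
    case False
    then have "p ((- t) *\<^sub>R (- x)) = - t * p (- x)" by (intro sublinear_scaleR[OF p]) simp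
    then show ?thesis using uminus[of x] by simp
  qed (simp add: sublinear_scaleR[OF p])
qed

text \<open>\<open>ray_inf p y\<close> lies below \<open>p\<close> and is at most \<open>- p y\<close> at \<open>- y\<close>; hence a minimal sublinear
  functional is odd, i.e.\ linear. This yields Hahn--Banach by Zorn's lemma.\<close>

definition ray_inf :: "('b::real_vector \<Rightarrow> real) \<Rightarrow> 'b \<Rightarrow> 'b \<Rightarrow> real" where
  "ray_inf p y x = Inf ((\<lambda>s. p (x + s *\<^sub>R y) - s * p y) ` {0..})"

context
  fixes p :: "'b::real_vector \<Rightarrow> real"
  assumes p: "sublinear p"
begin

lemma ray_inf_le:
  assumes "0 \<le> s"
  shows "ray_inf p y x \<le> p (x + s *\<^sub>R y) - s * p y"
proof -
  have "- p (- x) \<le> p (x + s *\<^sub>R y) - s * p y" if "0 \<le> s" for s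
    using sublinear_add[OF p, of "x + s *\<^sub>R y" "- x"] sublinear_scaleR[OF p that, of y] by simp
  then have "bdd_below ((\<lambda>s. p (x + s *\<^sub>R y) - s * p y) ` {0..})"
    by (intro bdd_belowI2) auto
  then show ?thesis unfolding ray_inf_def using assms by (intro cInf_lower) auto
qed

lemma ray_inf_greatest: "(\<And>s. 0 \<le> s \<Longrightarrow> c \<le> p (x + s *\<^sub>R y) - s * p y) \<Longrightarrow> c \<le> ray_inf p y x"
  unfolding ray_inf_def by (intro cInf_greatest) auto

lemma ray_inf_le_self: "ray_inf p y x \<le> p x"
  using ray_inf_le[of 0] by simp

lemma ray_inf_uminus: "ray_inf p y (- y) \<le> - p y"
  using ray_inf_le[of 1 y "- y"] sublinear_0[OF p] by simp

lemma sublinear_ray_inf: "sublinear (ray_inf p y)"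
proof (rule sublinearI)
  fix x x'
  have "ray_inf p y (x + x') - (p (x' + s' *\<^sub>R y) - s' * p y) \<le> ray_inf p y x"
    if "0 \<le> s'" for s' :: real
  proof (rule ray_inf_greatest)
    fix s :: real assume "0 \<le> s"
    have "(x + x') + (s + s') *\<^sub>R y = (x + s *\<^sub>R y) + (x' + s' *\<^sub>R y)"
      by (simp add: algebra_simps)
    moreover have "ray_inf p y (x + x') \<le> p ((x + x') + (s + s') *\<^sub>R y) - (s + s') * p y"
      by (rule ray_inf_le) (use \<open>0 \<le> s\<close> that in simp)
    ultimately have "ray_inf p y (x + x') \<le> p ((x + s *\<^sub>R y) + (x' + s' *\<^sub>R y)) - (s + s') * p y"
      by (simp only:)
    also have "\<dots> \<le> (p (x + s *\<^sub>R y) - s * p y) + (p (x' + s' *\<^sub>R y) - s' * p y)"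
      using sublinear_add[OF p, of "x + s *\<^sub>R y" "x' + s' *\<^sub>R y"] distrib_right[of s s' "p y"] by linarith
    finally show "ray_inf p y (x + x') - (p (x' + s' *\<^sub>R y) - s' * p y) \<le> p (x + s *\<^sub>R y) - s * p y"
      by simp
  qed
  then have "ray_inf p y (x + x') - ray_inf p y x \<le> ray_inf p y x'"
    by (intro ray_inf_greatest) (auto simp: algebra_simps)
  then show "ray_inf p y (x + x') \<le> ray_inf p y x + ray_inf p y x'" by simp
next
  fix t :: real and x assume t: "0 < t"
  have "ray_inf p y (t *\<^sub>R x) / t \<le> ray_inf p y x"
  proof (rule ray_inf_greatest)
    fix s :: real assume "0 \<le> s"
    have "ray_inf p y (t *\<^sub>R x) \<le> p (t *\<^sub>R (x + s *\<^sub>R y)) - (t * s) * p y"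
      using ray_inf_le[of "t * s" y "t *\<^sub>R x"] \<open>0 \<le> s\<close> t by (simp add: algebra_simps)
    also have "\<dots> = t * (p (x + s *\<^sub>R y) - s * p y)"
      using sublinear_scaleR[OF p, of t "x + s *\<^sub>R y"] t by (simp add: right_diff_distrib)
    finally show "ray_inf p y (t *\<^sub>R x) / t \<le> p (x + s *\<^sub>R y) - s * p y"
      using t by (simp add: field_simps)
  qed
  then show "ray_inf p y (t *\<^sub>R x) \<le> t * ray_inf p y x" using t by (simp add: field_simps)
next
  show "ray_inf p y 0 \<le> 0" using ray_inf_le_self[of y 0] sublinear_0[OF p] by simp
qed

end

context
  fixes C :: "('b::real_vector \<Rightarrow> real) set" and p :: "'b \<Rightarrow> real"
  assumes nonempty: "C \<noteq> {}" and below_p: "\<And>q. q \<in> C \<Longrightarrow> sublinear q \<and> q \<le> p"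
    and chain: "\<And>q q'. q \<in> C \<Longrightarrow> q' \<in> C \<Longrightarrow> q \<le> q' \<or> q' \<le> q"
begin

lemma Inf_chain_le:
  assumes "q \<in> C"
  shows "Inf ((\<lambda>q. q x) ` C) \<le> q x"
proof -
  have "- p (- x) \<le> q x" if "q \<in> C" for q
  proof -
    have "q (- x) \<le> p (- x)" using below_p[OF that] by (simp add: le_fun_def)
    then show ?thesis using sublinear_uminus_ge[of q x] below_p[OF that] by linarith
  qed
  then show ?thesis using assms by (intro cInf_lower bdd_belowI2) auto
qed

lemma Inf_chain_greatest: "(\<And>q. q \<in> C \<Longrightarrow> c \<le> q x) \<Longrightarrow> c \<le> Inf ((\<lambda>q. q x) ` C)"
  using nonempty by (intro cInf_greatest) auto

lemma sublinear_Inf_chain: "sublinear (\<lambda>x. Inf ((\<lambda>q. q x) ` C))"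
proof (rule sublinearI)
  fix x y
  have "Inf ((\<lambda>q. q (x + y)) ` C) - q' y \<le> Inf ((\<lambda>q. q x) ` C)" if "q' \<in> C" for q'
  proof (rule Inf_chain_greatest)
    fix q assume "q \<in> C"
    define m where "m = (if q \<le> q' then q else q')"
    have m: "m \<in> C" "m \<le> q" "m \<le> q'"
      using chain[OF \<open>q \<in> C\<close> that] \<open>q \<in> C\<close> that by (auto simp: m_def)
    have "Inf ((\<lambda>q. q (x + y)) ` C) \<le> m x + m y"
      using Inf_chain_le[OF m(1)] sublinear_add[of m x y] below_p[OF m(1)] by (meson order_trans)
    also have "\<dots> \<le> q x + q' y" using m(2,3) by (simp add: le_fun_def add_mono)
    finally show "Inf ((\<lambda>q. q (x + y)) ` C) - q' y \<le> q x" by simp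
  qed
  then have "Inf ((\<lambda>q. q (x + y)) ` C) - Inf ((\<lambda>q. q x) ` C) \<le> Inf ((\<lambda>q. q y) ` C)"
    by (intro Inf_chain_greatest) (auto simp: algebra_simps)
  then show "Inf ((\<lambda>q. q (x + y)) ` C) \<le> Inf ((\<lambda>q. q x) ` C) + Inf ((\<lambda>q. q y) ` C)" by simp
next
  fix t :: real and x assume t: "0 < t"
  have "Inf ((\<lambda>q. q (t *\<^sub>R x)) ` C) / t \<le> Inf ((\<lambda>q. q x) ` C)"
  proof (rule Inf_chain_greatest)
    fix q assume "q \<in> C"
    then have "Inf ((\<lambda>q. q (t *\<^sub>R x)) ` C) \<le> t * q x"
      using Inf_chain_le[of q "t *\<^sub>R x"] below_p sublinear_scaleR[of q t x] t by auto
    then show "Inf ((\<lambda>q. q (t *\<^sub>R x)) ` C) / t \<le> q x" using t by (simp add: field_simps)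
  qed
  then show "Inf ((\<lambda>q. q (t *\<^sub>R x)) ` C) \<le> t * Inf ((\<lambda>q. q x) ` C)" using t by (simp add: field_simps)
next
  obtain q where "q \<in> C" using nonempty by blast
  then show "Inf ((\<lambda>q. q 0) ` C) \<le> 0" using Inf_chain_le[of q 0] below_p sublinear_0 by metis
qed

end

theorem Hahn_Banach_sublinear:
  fixes p :: "'b::real_vector \<Rightarrow> real"
  assumes p: "sublinear p"
  obtains L where "linear L" "L \<le> p" "L x0 = p x0"
proof -
  define S where "S = {q. sublinear q \<and> q \<le> p \<and> q (- x0) \<le> - p x0}"
  have in_S: "q \<in> S" if "sublinear q" "q \<le> q'" "q' \<in> S" for q q'
    using that order_trans[OF that(2)] le_funD[OF that(2), of "- x0"] by (simp add: S_def)
  have "ray_inf p x0 \<in> S"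
    using sublinear_ray_inf[OF p] ray_inf_le_self[OF p] ray_inf_uminus[OF p]
    by (simp add: S_def le_fun_def)
  have "partial_order_on S (relation_of (\<lambda>q q'. q' \<le> q) S)"
    by (rule partial_order_on_relation_ofI) (metis order_refl order_trans order_antisym)+
  moreover have "\<exists>u\<in>S. \<forall>q\<in>C. u \<le> q" if "C \<in> Chains (relation_of (\<lambda>q q'. q' \<le> q) S)" for C
  proof (cases "C = {}")
    case False
    have C: "C \<subseteq> S" "\<And>q q'. q \<in> C \<Longrightarrow> q' \<in> C \<Longrightarrow> q \<le> q' \<or> q' \<le> q"
      using that unfolding Chains_def relation_of_def by auto
    then have below_p: "\<And>q. q \<in> C \<Longrightarrow> sublinear q \<and> q \<le> p" by (auto simp: S_def)
    define u where "u = (\<lambda>x. Inf ((\<lambda>q. q x) ` C))"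
    have "sublinear u" "\<And>q. q \<in> C \<Longrightarrow> u \<le> q"
      using sublinear_Inf_chain[OF False below_p C(2)] Inf_chain_le[OF False below_p C(2)]
      by (auto simp: u_def le_fun_def)
    moreover obtain q where "q \<in> C" using False by blast
    ultimately show ?thesis using in_S C(1) by blast
  qed (use \<open>ray_inf p x0 \<in> S\<close> in blast)
  ultimately obtain m where m: "m \<in> S" and minimal: "\<And>q. q \<in> S \<Longrightarrow> q \<le> m \<Longrightarrow> q = m"
    using predicate_Zorn[of S "\<lambda>q q'. q' \<le> q"] by auto
  have ms: "sublinear m" "m \<le> p" "m (- x0) \<le> - p x0" using m by (simp_all add: S_def)
  have "ray_inf m y = m" for y
    using minimal in_S[OF sublinear_ray_inf[OF ms(1)] _ m] ray_inf_le_self[OF ms(1)] by (simp add: le_funI)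
  then have "linear m" using sublinear_odd_imp_linear[OF ms(1)] ray_inf_uminus[OF ms(1)] by metis
  moreover have "m x0 = p x0"
    using le_funD[OF ms(2), of x0] ms(3) sublinear_uminus_ge[OF ms(1), of x0] by linarith
  ultimately show ?thesis using that ms(2) by blast
qed

definition minkowski_functional :: "'b::real_vector set \<Rightarrow> 'b \<Rightarrow> real" where
  "minkowski_functional E x = Inf {t. 0 < t \<and> inverse t *\<^sub>R x \<in> E}"

context
  fixes E :: "'b::real_vector set"
  assumes convex: "convex E" and zero: "0 \<in> E" and absorbing: "\<And>v. \<exists>s>0. s *\<^sub>R v \<in> E"
begin

lemma minkowski_functional_le: "0 < t \<Longrightarrow> inverse t *\<^sub>R x \<in> E \<Longrightarrow> minkowski_functional E x \<le> t"
  unfolding minkowski_functional_def by (rule cInf_lower) (auto intro: bdd_belowI[where m = 0])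

lemma minkowski_functional_greatest:
  assumes "\<And>t. 0 < t \<Longrightarrow> inverse t *\<^sub>R x \<in> E \<Longrightarrow> c \<le> t"
  shows "c \<le> minkowski_functional E x"
proof -
  obtain s where "0 < s" "s *\<^sub>R x \<in> E" using absorbing by blast
  then have "inverse s \<in> {t. 0 < t \<and> inverse t *\<^sub>R x \<in> E}" by simp
  then show ?thesis unfolding minkowski_functional_def using assms by (intro cInf_greatest) blast+
qed

lemma minkowski_functional_le_1: "x \<in> E \<Longrightarrow> minkowski_functional E x \<le> 1"
  using minkowski_functional_le[of 1] by simp

lemma mem_if_minkowski_functional_less_1:
  assumes "minkowski_functional E x < 1"
  shows "x \<in> E"
proof -
  obtain t where t: "0 < t" "t < 1" "inverse t *\<^sub>R x \<in> E"
    using assms minkowski_functional_le_1[OF zero] minkowski_functional_greatest[of x 1]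
    by (force simp: not_le)
  have "t *\<^sub>R (inverse t *\<^sub>R x) + (1 - t) *\<^sub>R 0 \<in> E"
    by (rule convexD[OF convex t(3) zero]) (use t in auto)
  then show ?thesis using t by simp
qed

lemma minkowski_functional_add:
  "minkowski_functional E (x + y) \<le> minkowski_functional E x + minkowski_functional E y"
proof -
  have sum: "minkowski_functional E (x + y) \<le> a + b"
    if a: "0 < a" "inverse a *\<^sub>R x \<in> E" and b: "0 < b" "inverse b *\<^sub>R y \<in> E" for a b
  proof (rule minkowski_functional_le)
    have "inverse (a + b) *\<^sub>R (x + y) =
        (a / (a + b)) *\<^sub>R (inverse a *\<^sub>R x) + (b / (a + b)) *\<^sub>R (inverse b *\<^sub>R y)"
      using a b by (simp add: scaleR_add_right inverse_eq_divide)
    also have "\<dots> \<in> E"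
      using a b by (intro convexD[OF convex]) (auto simp: add_divide_distrib[symmetric])
    finally show "inverse (a + b) *\<^sub>R (x + y) \<in> E" .
  qed (use a b in simp)
  have "minkowski_functional E (x + y) - b \<le> minkowski_functional E x"
    if b: "0 < b" "inverse b *\<^sub>R y \<in> E" for b
  proof (rule minkowski_functional_greatest)
    fix a assume "0 < a" "inverse a *\<^sub>R x \<in> E"
    from sum[OF this b] show "minkowski_functional E (x + y) - b \<le> a" by simp
  qed
  then have "minkowski_functional E (x + y) - minkowski_functional E x \<le> minkowski_functional E y"
    by (intro minkowski_functional_greatest) (simp add: algebra_simps)
  then show ?thesis by simp
qed

lemma minkowski_functional_scaleR_le:
  assumes t: "0 < t"
  shows "minkowski_functional E (t *\<^sub>R x) \<le> t * minkowski_functional E x"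
proof -
  have "minkowski_functional E (t *\<^sub>R x) / t \<le> minkowski_functional E x"
  proof (rule minkowski_functional_greatest)
    fix s assume "0 < s" "inverse s *\<^sub>R x \<in> E"
    moreover have "inverse (t * s) *\<^sub>R (t *\<^sub>R x) = inverse s *\<^sub>R x" using t by simp
    ultimately have "minkowski_functional E (t *\<^sub>R x) \<le> t * s"
      using t by (metis minkowski_functional_le mult_pos_pos)
    then show "minkowski_functional E (t *\<^sub>R x) / t \<le> s" using t by (simp add: field_simps)
  qed
  then show ?thesis using t by (simp add: field_simps)
qed

lemma sublinear_minkowski_functional: "sublinear (minkowski_functional E)"
proof (rule sublinearI[OF minkowski_functional_add minkowski_functional_scaleR_le])
  show "minkowski_functional E 0 \<le> 0"
  proof (rule dense_ge)
    fix t :: real assume "0 < t"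
    then show "minkowski_functional E 0 \<le> t" using minkowski_functional_le[of t 0] zero by simp
  qed
qed

end

definition algebraic_interior :: "'b::real_vector set \<Rightarrow> 'b set" where
  "algebraic_interior B = {b. \<forall>v. \<exists>e>0. \<forall>s. 0 \<le> s \<and> s \<le> e \<longrightarrow> b + s *\<^sub>R v \<in> B}"

lemma algebraic_interiorD:
  assumes "b \<in> algebraic_interior B"
  obtains e where "0 < e" "\<And>s. 0 \<le> s \<Longrightarrow> s \<le> e \<Longrightarrow> b + s *\<^sub>R v \<in> B"
  using assms unfolding algebraic_interior_def by blast

lemma algebraic_interior_subset: "algebraic_interior B \<subseteq> B"
  by (force simp: algebraic_interior_def)

lemma algebraic_interior_Times:
  assumes "a \<in> algebraic_interior A" "b \<in> algebraic_interior B"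
  shows "(a, b) \<in> algebraic_interior (A \<times> B)"
  unfolding algebraic_interior_def
proof (intro CollectI allI)
  fix v :: "'a \<times> 'b"
  obtain e where "0 < e" "\<And>s. 0 \<le> s \<Longrightarrow> s \<le> e \<Longrightarrow> a + s *\<^sub>R fst v \<in> A"
    using algebraic_interiorD[OF assms(1)] by blast
  moreover obtain e' where "0 < e'" "\<And>s. 0 \<le> s \<Longrightarrow> s \<le> e' \<Longrightarrow> b + s *\<^sub>R snd v \<in> B"
    using algebraic_interiorD[OF assms(2)] by blast
  ultimately show "\<exists>e>0. \<forall>s. 0 \<le> s \<and> s \<le> e \<longrightarrow> (a, b) + s *\<^sub>R v \<in> A \<times> B"
    by (intro exI[of _ "min e e'"]) (auto simp: mem_Times_iff)
qed

lemma lessThan_algebraic_interior: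
  fixes c :: real
  assumes "b < c"
  shows "b \<in> algebraic_interior {..<c}"
  unfolding algebraic_interior_def
proof (intro CollectI allI)
  fix v :: real
  define e where "e = (c - b) / (\<bar>v\<bar> + 1)"
  have pos: "0 < \<bar>v\<bar> + 1" by (simp add: add_pos_nonneg)
  have "b + s * v < c" if "0 \<le> s" "s \<le> e" for s
  proof -
    have "s * v \<le> e * \<bar>v\<bar>"
      using that by (meson abs_ge_self abs_ge_zero mult_left_mono mult_right_mono order_trans)
    also have "\<dots> < c - b" using assms pos by (simp add: e_def field_simps)
    finally show ?thesis by simp
  qed
  moreover have "0 < e" using assms pos by (simp add: e_def)
  ultimately show "\<exists>e>0. \<forall>s. 0 \<le> s \<and> s \<le> e \<longrightarrow> b + s *\<^sub>R v \<in> {..<c}" by auto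
qed

theorem separation_algebraic_interior:
  fixes A B :: "'b::real_vector set"
  assumes A: "convex A" "a0 \<in> A" and B: "convex B" "b0 \<in> algebraic_interior B"
    and disjoint: "A \<inter> B = {}"
  obtains L :: "'b \<Rightarrow> real" where "linear L" "L b0 < L a0" "\<And>a b. a \<in> A \<Longrightarrow> b \<in> B \<Longrightarrow> L b \<le> L a"
proof -
  \<comment> \<open>\<open>E = B - A + (a0 - b0)\<close> is a convex absorbing set not containing \<open>a0 - b0\<close>.\<close>
  define p where "p = a0 - b0"
  define E where "E = (+) p ` (\<Union>b\<in>B. \<Union>a\<in>A. {b - a})"
  have E_iff: "x \<in> E \<longleftrightarrow> (\<exists>a\<in>A. \<exists>b\<in>B. x = p + (b - a))" for x
    by (auto simp: E_def)
  have "convex E" unfolding E_def by (intro convex_translation convex_differences A B)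
  moreover have "0 \<in> E"
    using A(2) algebraic_interior_subset B(2) unfolding E_iff
    by (intro bexI[of _ a0] bexI[of _ b0]) (auto simp: p_def)
  moreover have "\<exists>s>0. s *\<^sub>R v \<in> E" for v
  proof -
    obtain e where "0 < e" "b0 + e *\<^sub>R v \<in> B"
      using algebraic_interiorD[OF B(2), of v] by (metis less_imp_le order_refl)
    moreover have "e *\<^sub>R v = p + ((b0 + e *\<^sub>R v) - a0)" by (simp add: p_def)
    ultimately show ?thesis using A(2) unfolding E_iff by blast
  qed
  ultimately have mf: "sublinear (minkowski_functional E)"
    "\<And>x. x \<in> E \<Longrightarrow> minkowski_functional E x \<le> 1"
    "\<And>x. minkowski_functional E x < 1 \<Longrightarrow> x \<in> E"
    using sublinear_minkowski_functional minkowski_functional_le_1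
      mem_if_minkowski_functional_less_1 by blast+
  have "p \<notin> E" using E_iff disjoint by auto
  then have p: "1 \<le> minkowski_functional E p" using mf(3) by force
  obtain L where L: "linear L" "L \<le> minkowski_functional E" "L p = minkowski_functional E p"
    using Hahn_Banach_sublinear[OF mf(1)] by blast
  have "L b \<le> L a" if "a \<in> A" "b \<in> B" for a b
  proof -
    have "p + (b - a) \<in> E" using that unfolding E_iff by blast
    then have "L (p + (b - a)) \<le> 1" using le_funD[OF L(2)] mf(2) by (meson order_trans)
    then show ?thesis using L(1,3) p by (simp add: linear_add linear_diff)
  qed
  moreover have "L b0 < L a0" using L(1,3) p by (simp add: p_def linear_diff)
  ultimately show ?thesis using that[OF L(1)] by blast
qed

corollary separation_algebraic_interior_strict:
  fixes A B :: "'b::real_vector set"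
  assumes "convex A" "a0 \<in> A" "convex B" "b0 \<in> algebraic_interior B" "A \<inter> B = {}"
  obtains L :: "'b \<Rightarrow> real" and \<delta> where "linear L" "0 < \<delta>" "\<And>a. a \<in> A \<Longrightarrow> L b0 + \<delta> \<le> L a"
    "\<And>a b. a \<in> A \<Longrightarrow> b \<in> B \<Longrightarrow> L b \<le> L a"
proof -
  obtain L :: "'b \<Rightarrow> real" where L: "linear L" "L b0 < L a0" "\<And>a b. a \<in> A \<Longrightarrow> b \<in> B \<Longrightarrow> L b \<le> L a"
    by (rule separation_algebraic_interior[OF assms]) (rule that)
  obtain s where s: "0 < s" "b0 + s *\<^sub>R (a0 - b0) \<in> B"
    using algebraic_interiorD[OF assms(4)] by (metis less_imp_le order_refl)
  have "L (b0 + s *\<^sub>R (a0 - b0)) = L b0 + s * (L a0 - L b0)"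
    by (simp only: linear_add[OF L(1)] linear_diff[OF L(1)] linear_scale[OF L(1)] real_scaleR_def)
  then have "L b0 + s * (L a0 - L b0) \<le> L a" if "a \<in> A" for a using L(3)[OF that s(2)] by simp
  moreover have "0 < s * (L a0 - L b0)" using s(1) L(2) by simp
  ultimately show ?thesis using that[OF L(1)] L(3) by blast
qed

section \<open>Linear functionals on locally convex spaces\<close>

lemma le_if_forall_neg:
  fixes c q M :: real
  assumes "\<And>r. r < 0 \<Longrightarrow> c + q * r \<le> M"
  shows "c \<le> M"
proof (cases "q \<le> 0")
  case True
  then show ?thesis using assms[of "- 1"] by simp
next
  case False
  show ?thesis
  proof (rule ccontr)
    assume "\<not> c \<le> M"
    define r where "r = - (c - M) / (2 * q)"
    have "r < 0" using False \<open>\<not> c \<le> M\<close> by (simp add: r_def divide_neg_pos)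
    moreover have "q * r = - (c - M) / 2" using False by (simp add: r_def)
    ultimately show False using assms[of r] \<open>\<not> c \<le> M\<close> by auto
  qed
qed

lemma le_pos_multiples_nonneg_nonpos:
  fixes c q :: real
  assumes le: "\<And>r. 0 < r \<Longrightarrow> c \<le> q * r"
  shows "0 \<le> q" and "c \<le> 0"
proof -
  show "0 \<le> q"
  proof (rule ccontr)
    assume "\<not> 0 \<le> q"
    define r where "r = (\<bar>c\<bar> + 1) / - q"
    have "0 < r" unfolding r_def using \<open>\<not> 0 \<le> q\<close> by (intro divide_pos_pos) (auto simp: add_pos_nonneg)
    moreover have "q * r = - (\<bar>c\<bar> + 1)" using \<open>\<not> 0 \<le> q\<close> by (simp add: r_def)
    ultimately show False using le[of r] by linarith
  qed
  show "c \<le> 0"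
  proof (rule le_if_forall_neg[of c q 0])
    fix r :: real assume "r < 0"
    then show "c + q * r \<le> 0" using le[of "- r"] by simp
  qed
qed

lemma quadratic_nonpos_near_0:
  fixes c0 c1 c2 :: real
  assumes nonpos: "\<And>t. 0 < t \<Longrightarrow> t \<le> 1 \<Longrightarrow> c0 + c1 * t + c2 * t\<^sup>2 \<le> 0"
  shows "c0 \<le> 0" and "c0 = 0 \<Longrightarrow> c1 \<le> 0"
proof -
  have ev: "eventually (\<lambda>t. 0 < t \<and> t \<le> 1) (at_right (0::real))"
    using eventually_at_right_real[of 0 1] by (rule eventually_mono) auto
  have "((\<lambda>t. c0 + c1 * t + c2 * t\<^sup>2) \<longlongrightarrow> c0 + c1 * 0 + c2 * 0\<^sup>2) (at_right 0)"
    by (intro tendsto_intros)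
  then have "((\<lambda>t. c0 + c1 * t + c2 * t\<^sup>2) \<longlongrightarrow> c0) (at_right 0)" by simp
  then show "c0 \<le> 0"
  proof (rule tendsto_upperbound)
    show "eventually (\<lambda>t. c0 + c1 * t + c2 * t\<^sup>2 \<le> 0) (at_right 0)"
      using ev by (rule eventually_mono) (use nonpos in auto)
  qed simp
  assume "c0 = 0"
  have "c1 + c2 * t \<le> 0" if "0 < t" "t \<le> 1" for t
  proof -
    have "t * (c1 + c2 * t) \<le> 0"
      using nonpos[OF that] \<open>c0 = 0\<close> by (simp add: power2_eq_square algebra_simps)
    then show ?thesis using that by (auto simp: mult_le_0_iff)
  qed
  then have "eventually (\<lambda>t. c1 + c2 * t \<le> 0) (at_right 0)"
    using ev by (rule eventually_mono[rotated]) auto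
  moreover have "((\<lambda>t. c1 + c2 * t) \<longlongrightarrow> c1 + c2 * 0) (at_right 0)"
    by (intro tendsto_intros)
  ultimately show "c1 \<le> 0"
    using tendsto_upperbound[of "\<lambda>t. c1 + c2 * t" c1 "at_right (0::real)" 0] by simp
qed

lemma linear_pair_split:
  fixes L :: "'b::real_vector \<times> 'c::real_vector \<Rightarrow> real"
  assumes "linear L"
  shows "L (x, y) = L (x, 0) + L (0, y)"
    and "linear (\<lambda>x. L (x, 0))" and "linear (\<lambda>y. L (0, y))"
proof -
  show "L (x, y) = L (x, 0) + L (0, y)"
    using linear_add[OF assms, of "(x, 0)" "(0, y)"] by simp
  have "linear (\<lambda>x::'b. (x, 0::'c))" "linear (\<lambda>y::'c. (0::'b, y))"
    by (auto intro: linearI)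
  from this[THEN linear_compose, OF assms]
  show "linear (\<lambda>x. L (x, 0))" "linear (\<lambda>y. L (0, y))" by (simp_all add: o_def)
qed

lemma linear_real_apply: "linear (L :: real \<Rightarrow> real) \<Longrightarrow> L r = r * L 1"
  using linear_scale[of L r 1] by simp

lemma linear_nonpos_on_algebraic_interior:
  fixes f :: "'b::real_vector \<Rightarrow> real"
  assumes "linear f" "c \<in> algebraic_interior S" "\<And>x. x \<in> S \<Longrightarrow> f x \<le> 0" "0 \<le> f c"
  shows "f = (\<lambda>x. 0)"
proof -
  have nonpos: "f v \<le> 0" for v
  proof -
    obtain e where "0 < e" "c + e *\<^sub>R v \<in> S"
      using algebraic_interiorD[OF assms(2), of v] by (metis less_imp_le order_refl)
    then have "f c + e * f v \<le> 0" using assms(1) assms(3)[of "c + e *\<^sub>R v"] by (simp add: linear_add linear_scale)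
    then have "e * f v \<le> 0" using assms(4) by linarith
    then show ?thesis using \<open>0 < e\<close> by (simp add: mult_le_0_iff)
  qed
  show ?thesis
  proof
    show "f v = 0" for v using nonpos[of v] nonpos[of "- v"] linear_neg[OF assms(1), of v] by simp
  qed
qed

instantiation "fun" :: (type, real_vector) real_vector
begin
definition scaleR_fun :: "real \<Rightarrow> ('a \<Rightarrow> 'b) \<Rightarrow> 'a \<Rightarrow> 'b" where
  "scaleR_fun r f = (\<lambda>x. r *\<^sub>R f x)"
instance
  by standard (simp_all add: scaleR_fun_def fun_eq_iff scaleR_add_right scaleR_add_left)
end

lemma scaleR_fun_apply [simp]: "(r *\<^sub>R f) x = r *\<^sub>R f x"
  by (simp add: scaleR_fun_def)

lemma lcs_topspace: "lcs \<tau> \<Longrightarrow> topspace \<tau> = UNIV"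
  by (simp add: lcs_def)

lemma continuous_map_lcs_affine:
  assumes "lcs \<tau>"
  shows "continuous_map \<tau> \<tau> (\<lambda>x. c *\<^sub>R x + b)"
proof -
  have "continuous_map \<tau> (prod_topology euclideanreal \<tau>) (\<lambda>x. (c, x))"
    using assms by (intro continuous_map_pairedI) (auto simp: lcs_topspace)
  then have "continuous_map \<tau> \<tau> (\<lambda>x. c *\<^sub>R x)"
    using continuous_map_compose assms unfolding lcs_def by (fastforce simp: o_def)
  then have "continuous_map \<tau> (prod_topology \<tau> \<tau>) (\<lambda>x. (c *\<^sub>R x, b))"
    using assms by (intro continuous_map_pairedI) (auto simp: lcs_topspace)
  then show ?thesis
    using continuous_map_compose assms unfolding lcs_def by (fastforce simp: o_def)
qed

lemma continuous_map_lcs_ray: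
  assumes "lcs \<tau>"
  shows "continuous_map euclideanreal \<tau> (\<lambda>s. b + s *\<^sub>R v)"
proof -
  have "continuous_map euclideanreal (prod_topology euclideanreal \<tau>) (\<lambda>s. (s, v))"
    using assms by (intro continuous_map_pairedI) (auto simp: lcs_topspace)
  then have "continuous_map euclideanreal \<tau> (\<lambda>s. s *\<^sub>R v)"
    using continuous_map_compose assms unfolding lcs_def by (fastforce simp: o_def)
  then have "continuous_map euclideanreal (prod_topology \<tau> \<tau>) (\<lambda>s. (b, s *\<^sub>R v))"
    using assms by (intro continuous_map_pairedI) (auto simp: lcs_topspace)
  then show ?thesis
    using continuous_map_compose assms unfolding lcs_def by (fastforce simp: o_def)
qed

lemma openin_lcs_affine_vimage:
  assumes "lcs \<tau>" "openin \<tau> V"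
  shows "openin \<tau> {x. c *\<^sub>R x + b \<in> V}"
  using openin_continuous_map_preimage[OF continuous_map_lcs_affine[OF assms(1)] assms(2)]
  by (simp add: lcs_topspace[OF assms(1)])

lemma openin_lcs_translate: "lcs \<tau> \<Longrightarrow> openin \<tau> V \<Longrightarrow> openin \<tau> {d. x + d \<in> V}"
  using openin_lcs_affine_vimage[of \<tau> V 1 x] by (simp add: add.commute)

lemma openin_lcs_subset_algebraic_interior:
  assumes "lcs \<tau>" "openin \<tau> V"
  shows "V \<subseteq> algebraic_interior V"
proof
  fix b assume "b \<in> V"
  have "\<exists>e>0. \<forall>s. 0 \<le> s \<and> s \<le> e \<longrightarrow> b + s *\<^sub>R v \<in> V" for v
  proof -
    have "open {s. b + s *\<^sub>R v \<in> V}"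
      using openin_continuous_map_preimage[OF continuous_map_lcs_ray[OF assms(1)] assms(2)] by simp
    moreover have "0 \<in> {s. b + s *\<^sub>R v \<in> V}" using \<open>b \<in> V\<close> by simp
    ultimately obtain e where e: "0 < e" "ball 0 e \<subseteq> {s. b + s *\<^sub>R v \<in> V}"
      by (meson open_contains_ball)
    have "b + s *\<^sub>R v \<in> V" if "0 \<le> s" "s \<le> e / 2" for s
    proof -
      have "s \<in> ball 0 e" using that e(1) by simp
      then show ?thesis using e(2) by blast
    qed
    then show ?thesis using e(1) by (intro exI[of _ "e / 2"]) simp
  qed
  then show "b \<in> algebraic_interior V" by (simp add: algebraic_interior_def)
qed

lemma lcs_closure_segment:
  assumes l: "lcs \<tau>" and V: "openin \<tau> V" "convex V"
    and x: "x \<in> \<tau> closure_of V" and a: "a \<in> V" and t: "0 < t" "t \<le> 1"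
  shows "(1 - t) *\<^sub>R x + t *\<^sub>R a \<in> V"
proof -
  \<comment> \<open>\<open>z\<close> is a convex combination of any \<open>w\<close> near \<open>x\<close> and of its reflection, which is near \<open>a\<close>.\<close>
  define z where "z = (1 - t) *\<^sub>R x + t *\<^sub>R a"
  define reflect where "reflect w = inverse t *\<^sub>R (z - (1 - t) *\<^sub>R w)" for w
  have affine: "reflect w = (- (inverse t * (1 - t))) *\<^sub>R w + inverse t *\<^sub>R z" for w
    by (simp add: reflect_def scaleR_diff_right)
  have "openin \<tau> {w. reflect w \<in> V}"
    unfolding affine by (rule openin_lcs_affine_vimage[OF l V(1)])
  moreover have "x \<in> {w. reflect w \<in> V}" using t a by (simp add: reflect_def z_def)
  ultimately obtain w where w: "w \<in> V" "reflect w \<in> V"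
    using x[unfolded in_closure_of] by (metis mem_Collect_eq)
  have "z = (1 - t) *\<^sub>R w + t *\<^sub>R reflect w" using t by (simp add: reflect_def)
  also have "\<dots> \<in> V" using convexD[OF V(2) w, of "1 - t" t] t by simp
  finally show ?thesis unfolding z_def .
qed

lemma le_on_closure_of:
  assumes "continuous_map X euclideanreal f" "\<And>y. y \<in> S \<Longrightarrow> f y \<le> c" "x \<in> X closure_of S"
  shows "f x \<le> c"
proof -
  have "closedin X {y \<in> topspace X. f y \<in> {..c}}"
    using assms(1) by (intro closedin_continuous_map_preimage) auto
  then have "X closure_of (topspace X \<inter> S) \<subseteq> {y \<in> topspace X. f y \<le> c}"
    using assms(2) by (intro closure_of_minimal) auto
  then show ?thesis using assms(3) closure_of_restrict[of X S] by auto
qed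

lemma dual_linear: "u \<in> dual \<tau> \<Longrightarrow> linear u"
  by (simp add: dual_def)

lemma dual_continuous: "u \<in> dual \<tau> \<Longrightarrow> continuous_map \<tau> euclideanreal u"
  by (simp add: dual_def)

lemma dual_zero: "0 \<in> dual \<tau>"
  by (simp add: dual_def zero_fun_def linear_zero)

lemma dual_add: "u \<in> dual \<tau> \<Longrightarrow> v \<in> dual \<tau> \<Longrightarrow> u + v \<in> dual \<tau>"
  unfolding dual_def plus_fun_def
  by (auto intro!: linearI continuous_map_add simp: linear_add linear_scale algebra_simps)

lemma dual_scaleR: "u \<in> dual \<tau> \<Longrightarrow> c *\<^sub>R u \<in> dual \<tau>"
  unfolding dual_def scaleR_fun_def
  by (auto intro!: linearI continuous_map_real_mult_left simp: linear_add linear_scale algebra_simps)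

lemma linear_dual_if_bounded_above:
  assumes l: "lcs \<tau>" and f: "linear f" and G: "openin \<tau> G" "x1 \<in> G"
    and bounded: "\<And>x. x \<in> G \<Longrightarrow> f x \<le> M"
  shows "f \<in> dual \<tau>"
proof -
  define K where "K = M - f x1"
  have K: "0 \<le> K" using bounded[OF G(2)] by (simp add: K_def)
  have "openin \<tau> {x. f x \<in> U}" if "open U" for U
  proof (subst openin_subopen, intro ballI)
    fix y assume "y \<in> {x. f x \<in> U}"
    then obtain e where e: "0 < e" "ball (f y) e \<subseteq> U" using \<open>open U\<close> open_contains_ball by force
    define k where "k = (K + 1) / e"
    have k: "0 < k" using K e by (simp add: k_def)
    \<comment> \<open>\<open>N\<close> consists of the \<open>v\<close> with \<open>x1 \<plusminus> k (v - y) \<in> G\<close>; there \<open>\<bar>f v - f y\<bar> \<le> K / k\<close>.\<close>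
    define N where "N = {v. k *\<^sub>R v + (x1 - k *\<^sub>R y) \<in> G} \<inter> {v. (- k) *\<^sub>R v + (x1 + k *\<^sub>R y) \<in> G}"
    have "\<bar>f v - f y\<bar> < e" if "v \<in> N" for v
    proof -
      from that have "f (k *\<^sub>R v + (x1 - k *\<^sub>R y)) \<le> M" "f ((- k) *\<^sub>R v + (x1 + k *\<^sub>R y)) \<le> M"
        using bounded by (auto simp: N_def)
      then have "\<bar>k * (f v - f y)\<bar> \<le> K"
        using f by (simp add: K_def abs_le_iff linear_add linear_diff linear_scale algebra_simps)
      then have "k * \<bar>f v - f y\<bar> \<le> K" using k by (simp add: abs_mult)
      then have "\<bar>f v - f y\<bar> \<le> K / k" using k by (simp add: field_simps)
      also have "\<dots> < e" using K e by (simp add: k_def field_simps)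
      finally show ?thesis .
    qed
    then have "N \<subseteq> {x. f x \<in> U}" using e(2) by (force simp: dist_real_def)
    moreover have "openin \<tau> N" unfolding N_def by (intro openin_Int openin_lcs_affine_vimage[OF l G(1)])
    moreover have "y \<in> N" using G(2) by (simp add: N_def)
    ultimately show "\<exists>N. openin \<tau> N \<and> y \<in> N \<and> N \<subseteq> {x. f x \<in> U}" by blast
  qed
  then have "continuous_map \<tau> euclideanreal f" by (auto simp: continuous_map_def lcs_topspace[OF l])
  then show ?thesis using f by (simp add: dual_def)
qed

section \<open>The Fitzpatrick function over the closure\<close>

lemma fitz_le_iff: "fitz R (x, xs) \<le> ereal a \<longleftrightarrow> (\<forall>(u, us) \<in> R. us x + xs u - us u \<le> a)"
  unfolding fitz_def by (auto simp: SUP_le_iff)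

lemma fitz_mono: "R \<subseteq> R' \<Longrightarrow> fitz R z \<le> fitz R' z"
  unfolding fitz_def by (rule SUP_subset_mono) auto

lemma operator_linear: "operator \<tau> R \<Longrightarrow> (u, us) \<in> R \<Longrightarrow> linear us"
  by (auto simp: operator_def dual_def)

lemma fitz_convex:
  assumes R: "operator \<tau> R" and le: "fitz R z1 \<le> ereal a1" "fitz R z2 \<le> ereal a2"
    and t: "0 \<le> t" "t \<le> 1"
  shows "fitz R (t *\<^sub>R z1 + (1 - t) *\<^sub>R z2) \<le> ereal (t * a1 + (1 - t) * a2)"
proof -
  obtain x1 xs1 x2 xs2 where z: "z1 = (x1, xs1)" "z2 = (x2, xs2)" by (cases z1, cases z2) simp
  have "us (t *\<^sub>R x1 + (1 - t) *\<^sub>R x2) + (t * xs1 u + (1 - t) * xs2 u) - us u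
      \<le> t * a1 + (1 - t) * a2" if "(u, us) \<in> R" for u us
  proof -
    have "us (t *\<^sub>R x1 + (1 - t) *\<^sub>R x2) + (t * xs1 u + (1 - t) * xs2 u) - us u
        = t * (us x1 + xs1 u - us u) + (1 - t) * (us x2 + xs2 u - us u)"
      using operator_linear[OF R that] by (simp add: linear_add linear_diff linear_scale algebra_simps)
    also have "\<dots> \<le> t * a1 + (1 - t) * a2"
      using le that t unfolding z fitz_le_iff by (intro add_mono mult_left_mono) auto
    finally show ?thesis .
  qed
  then show ?thesis unfolding z by (simp add: fitz_le_iff split_beta')
qed

lemma fitz_le_cpl_if_monotone:
  assumes R: "operator \<tau> R" "monotone_op R" and b: "(b, bs) \<in> R"
  shows "fitz R (b, bs) \<le> ereal (bs b)"
  unfolding fitz_le_iff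
proof (intro ballI, clarify)
  fix u us assume u: "(u, us) \<in> R"
  have "0 \<le> bs (b - u) - us (b - u)" using R(2) b u unfolding monotone_op_def by fast
  then show "us b + bs u - us u \<le> bs b"
    using operator_linear[OF R(1) b] operator_linear[OF R(1) u] by (simp add: linear_diff)
qed

locale NI_monotone =
  fixes \<tau> :: "'a::real_vector topology" and R :: "('a \<times> ('a \<Rightarrow> real)) set" and V :: "'a set"
  assumes lcs: "lcs \<tau>" and open_V: "openin \<tau> V" and convex_V: "convex V"
    and operator: "operator \<tau> R" and graph_over_V: "R \<subseteq> V \<times> UNIV"
    and monotone: "monotone_op R" and nonempty: "R \<noteq> {}"
    and NI: "\<And>y ys. y \<in> V \<Longrightarrow> ys \<in> dual \<tau> \<Longrightarrow> ereal (ys y) \<le> fitz R (y, ys)"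
begin

lemma fitz_segment_inequality:
  assumes x: "x \<in> \<tau> closure_of V" "xs \<in> dual \<tau>" "fitz R (x, xs) \<le> ereal a"
    and y: "y \<in> V" "ys \<in> dual \<tau>" "fitz R (y, ys) \<le> ereal b"
    and t: "0 < t" "t \<le> 1"
  shows "(1 - t)\<^sup>2 * xs x + t * (1 - t) * (xs y + ys x) + t\<^sup>2 * ys y \<le> (1 - t) * a + t * b"
proof -
  define z where "z = (1 - t) *\<^sub>R (x, xs) + (1 - (1 - t)) *\<^sub>R (y, ys)"
  have "fst z \<in> V" using lcs_closure_segment[OF lcs open_V convex_V x(1) y(1) t] by (simp add: z_def)
  moreover have "snd z \<in> dual \<tau>" using x(2) y(2) by (simp add: z_def dual_add dual_scaleR)
  ultimately have "ereal (snd z (fst z)) \<le> fitz R z" using NI[of "fst z" "snd z"] by simp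
  also have "\<dots> \<le> ereal ((1 - t) * a + (1 - (1 - t)) * b)"
    unfolding z_def using x(3) y(3) t by (intro fitz_convex[OF operator]) auto
  finally have "snd z (fst z) \<le> (1 - t) * a + t * b" by simp
  moreover have "snd z (fst z) = (1 - t)\<^sup>2 * xs x + t * (1 - t) * (xs y + ys x) + t\<^sup>2 * ys y"
    using dual_linear[OF x(2)] dual_linear[OF y(2)]
    by (simp add: z_def linear_add linear_diff linear_scale power2_eq_square algebra_simps)
  ultimately show ?thesis by simp
qed

lemma fitz_ge_cpl_on_closure:
  assumes "x \<in> \<tau> closure_of V" "xs \<in> dual \<tau>"
  shows "ereal (xs x) \<le> fitz R (x, xs)"
proof (rule ereal_le_real)
  fix a assume a: "fitz R (x, xs) \<le> ereal a"
  obtain b bs where b: "(b, bs) \<in> R" using nonempty by auto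
  have "b \<in> V" "bs \<in> dual \<tau>" using b graph_over_V operator by (auto simp: operator_def)
  note segment = fitz_segment_inequality[OF assms a this fitz_le_cpl_if_monotone[OF operator monotone b]]
  have "(xs x - a) + (bs x + xs b + a - 2 * xs x - bs b) * t + (xs x - bs x - xs b + bs b) * t\<^sup>2 \<le> 0"
    if "0 < t" "t \<le> 1" for t
    using segment[OF that] by (simp add: power2_eq_square algebra_simps)
  then have "xs x - a \<le> 0" by (rule quadratic_nonpos_near_0(1))
  then show "ereal (xs x) \<le> ereal a" by simp
qed

lemma fitz_ge_at_cpl_point:
  assumes x0: "x0 \<in> \<tau> closure_of V" "x0s \<in> dual \<tau>" "fitz R (x0, x0s) \<le> ereal (x0s x0)"
    and y: "y \<in> V" "ys \<in> dual \<tau>"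
  shows "ereal (x0s y - x0s x0 + ys x0) \<le> fitz R (y, ys)"
proof (rule ereal_le_real)
  fix b assume b: "fitz R (y, ys) \<le> ereal b"
  note segment = fitz_segment_inequality[OF x0 y b]
  have "0 + (x0s y + ys x0 - x0s x0 - b) * t + (x0s x0 - x0s y - ys x0 + ys y) * t\<^sup>2 \<le> 0"
    if "0 < t" "t \<le> 1" for t
    using segment[OF that] by (simp add: power2_eq_square algebra_simps)
  then have "x0s y + ys x0 - x0s x0 - b \<le> 0" using quadratic_nonpos_near_0(2) by blast
  then show "ereal (x0s y - x0s x0 + ys x0) \<le> ereal b" by simp
qed

end

lemma convex_comb_strict_less:
  fixes c1 c2 a1 a2 t :: real
  assumes "c1 < a1" "c2 < a2" "0 \<le> t" "t \<le> 1"
  shows "t * c1 + (1 - t) * c2 < t * a1 + (1 - t) * a2"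
proof (cases "t = 0")
  case False
  then have "t * c1 < t * a1" using assms by simp
  moreover have "(1 - t) * c2 \<le> (1 - t) * a2" using assms by (intro mult_left_mono) auto
  ultimately show ?thesis by linarith
qed (use assms in simp)

lemma fitz_convex_strict:
  assumes R: "operator \<tau> R" and less: "fitz R z1 < ereal a1" "fitz R z2 < ereal a2"
    and t: "0 \<le> t" "t \<le> 1"
  shows "fitz R (t *\<^sub>R z1 + (1 - t) *\<^sub>R z2) < ereal (t * a1 + (1 - t) * a2)"
proof -
  obtain c1 c2 where c: "fitz R z1 < ereal c1" "c1 < a1" "fitz R z2 < ereal c2" "c2 < a2"
    using ereal_dense2[OF less(1)] ereal_dense2[OF less(2)] by auto
  have "fitz R (t *\<^sub>R z1 + (1 - t) *\<^sub>R z2) \<le> ereal (t * c1 + (1 - t) * c2)"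
    using c t by (intro fitz_convex[OF R]) auto
  also have "\<dots> < ereal (t * a1 + (1 - t) * a2)"
    using convex_comb_strict_less[OF c(2,4) t] by simp
  finally show ?thesis .
qed

lemma convex_translation_vimage:
  assumes "convex S"
  shows "convex {d. x0 + d \<in> S}"
proof (rule convexI)
  fix d e :: 'a and u v :: real
  assume "d \<in> {d. x0 + d \<in> S}" "e \<in> {d. x0 + d \<in> S}" and uv: "0 \<le> u" "0 \<le> v" "u + v = 1"
  then have "u *\<^sub>R (x0 + d) + v *\<^sub>R (x0 + e) \<in> S" using convexD[OF assms] by simp
  moreover have "u *\<^sub>R (x0 + d) + v *\<^sub>R (x0 + e) = x0 + (u *\<^sub>R d + v *\<^sub>R e)"
    using uv by (simp add: algebra_simps flip: scaleR_add_left)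
  ultimately show "u *\<^sub>R d + v *\<^sub>R e \<in> {d. x0 + d \<in> S}" by simp
qed

lemma separation_from_lower_halfspace:
  fixes A :: "('a::real_vector \<times> real) set"
  assumes l: "lcs \<tau>" and S: "openin \<tau> S" "convex S"
    and A: "convex A" "(0, 1) \<in> A" "x0 + d1 \<in> S"
    and nonneg: "\<forall>(d, r) \<in> A. x0 + d \<in> S \<longrightarrow> 0 \<le> r"
  obtains L :: "'a \<times> real \<Rightarrow> real" where "linear L" "L (d1, - 1) < L (0, 1)"
    "\<And>d r d' r'. x0 + d \<in> S \<Longrightarrow> r < 0 \<Longrightarrow> (d', r') \<in> A \<Longrightarrow> L (d, r) \<le> L (d', r')"
proof -
  define B where "B = {d. x0 + d \<in> S} \<times> {..<0::real}"
  have convex_B: "convex B"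
    unfolding B_def using convex_translation_vimage[OF S(2)] by (simp add: convex_Times)
  have interior: "(d1, - 1) \<in> algebraic_interior B"
    unfolding B_def using openin_lcs_subset_algebraic_interior[OF l openin_lcs_translate[OF l S(1)]] A(3)
    by (intro algebraic_interior_Times lessThan_algebraic_interior) auto
  have disjoint: "A \<inter> B = {}"
  proof (intro equals0I)
    fix p assume "p \<in> A \<inter> B"
    moreover obtain d r where "p = (d, r)" by (cases p)
    ultimately have "(d, r) \<in> A" "x0 + d \<in> S" "r < 0" by (simp_all add: B_def)
    moreover from nonneg this(1) have "x0 + d \<in> S \<longrightarrow> 0 \<le> r" by blast
    ultimately show False by simp
  qed
  obtain L :: "'a \<times> real \<Rightarrow> real" where L: "linear L" "L (d1, - 1) < L (0, 1)"
    "\<And>a b. a \<in> A \<Longrightarrow> b \<in> B \<Longrightarrow> L b \<le> L a"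
    by (rule separation_algebraic_interior[OF A(1,2) convex_B interior disjoint]) (rule that)
  then show ?thesis using that by (simp add: B_def)
qed

lemma separating_functional_pair:
  fixes A :: "('a::real_vector \<times> real) set"
  assumes l: "lcs \<tau>" and S: "openin \<tau> S" "convex S"
    and A: "convex A" "\<forall>r>0. (0, r) \<in> A" "x0 + d1 \<in> S"
    and nonneg: "\<forall>(d, r) \<in> A. x0 + d \<in> S \<longrightarrow> 0 \<le> r"
  obtains ell q where "linear ell" "0 \<le> q" "ell d1 < 2 * q"
    "\<And>d. x0 + d \<in> S \<Longrightarrow> ell d \<le> 0"
    "\<And>d d' r'. x0 + d \<in> S \<Longrightarrow> (d', r') \<in> A \<Longrightarrow> ell d \<le> ell d' + q * r'"
proof -
  have "(0, 1) \<in> A" using A(2) by simp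
  obtain L :: "'a \<times> real \<Rightarrow> real" where L: "linear L" "L (d1, - 1) < L (0, 1)"
    "\<And>d r d' r'. x0 + d \<in> S \<Longrightarrow> r < 0 \<Longrightarrow> (d', r') \<in> A \<Longrightarrow> L (d, r) \<le> L (d', r')"
    by (rule separation_from_lower_halfspace[OF l S A(1) \<open>(0, 1) \<in> A\<close> A(3) nonneg]) (rule that)
  define ell where "ell d = L (d, 0)" for d
  define q where "q = L (0, 1)"
  have L_eq: "L (d, r) = ell d + q * r" for d r
    using linear_pair_split(1)[OF L(1), of d r] linear_real_apply[OF linear_pair_split(3)[OF L(1)], of r]
    by (simp add: ell_def q_def)
  have ell: "linear ell" unfolding ell_def by (rule linear_pair_split(2)[OF L(1)])
  have sep: "ell d \<le> ell d' + q * r'" if "x0 + d \<in> S" "(d', r') \<in> A" for d d' r'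
  proof (rule le_if_forall_neg)
    fix r :: real assume "r < 0"
    then show "ell d + q * r \<le> ell d' + q * r'" using L(3)[OF that(1) _ that(2)] by (simp add: L_eq)
  qed
  have pos: "0 \<le> q \<and> ell d \<le> 0" if "x0 + d \<in> S" for d
  proof -
    have "ell d \<le> q * r" if "0 < r" for r
      using sep[OF \<open>x0 + d \<in> S\<close>, of 0 r] A(2) that linear_0[OF ell] by simp
    then show ?thesis using le_pos_multiples_nonneg_nonpos[of "ell d" q] by blast
  qed
  show ?thesis
  proof (rule that[OF ell])
    show "0 \<le> q" using pos[OF A(3)] by simp
    show "ell d1 < 2 * q" using L(2) by (simp add: L_eq linear_0[OF ell])
  qed (use pos sep in blast)+
qed

lemma supporting_functional_at_closure_point:
  fixes A :: "('a::real_vector \<times> real) set"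
  assumes l: "lcs \<tau>" and S: "openin \<tau> S" "convex S" "x0 \<in> \<tau> closure_of S"
    and A: "convex A" "\<forall>r>0. (0, r) \<in> A" "(d1, r1) \<in> A" "x0 + d1 \<in> S"
    and nonneg: "\<forall>(d, r) \<in> A. x0 + d \<in> S \<longrightarrow> 0 \<le> r"
  obtains n where "n \<in> dual \<tau>" "\<And>y. y \<in> S \<Longrightarrow> n y \<le> n x0" "\<And>d r. (d, r) \<in> A \<Longrightarrow> - n d \<le> r"
proof -
  obtain ell q where ell: "linear ell" "0 \<le> q" "ell d1 < 2 * q"
    and nonpos: "\<And>d. x0 + d \<in> S \<Longrightarrow> ell d \<le> 0"
    and sep: "\<And>d d' r'. x0 + d \<in> S \<Longrightarrow> (d', r') \<in> A \<Longrightarrow> ell d \<le> ell d' + q * r'"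
    using separating_functional_pair[OF l S(1,2) A(1,2,4) nonneg] by blast
  have "ell \<in> dual \<tau>"
    using nonpos A(4) by (intro linear_dual_if_bounded_above[OF l ell(1) openin_lcs_translate[OF l S(1)]]) auto
  then have cont: "continuous_map \<tau> euclideanreal (\<lambda>y. ell (y - x0))"
    unfolding linear_diff[OF ell(1)]
    by (intro continuous_map_diff dual_continuous continuous_map_const[THEN iffD2]) simp_all
  \<comment> \<open>Since \<open>x0\<close> is in the closure of \<open>S\<close>, the supremum of \<open>ell\<close> over \<open>S - x0\<close> is \<open>0\<close>.\<close>
  have A_nonneg: "0 \<le> ell d + q * r" if "(d, r) \<in> A" for d r
    using le_on_closure_of[OF cont _ S(3), of "ell d + q * r"] sep[OF _ that] linear_0[OF ell(1)] by simp
  have "0 < q"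
  proof (rule ccontr)
    assume "\<not> 0 < q"
    then have "q = 0" using ell(2) by simp
    have "d1 \<in> algebraic_interior {d. x0 + d \<in> S}"
      using openin_lcs_subset_algebraic_interior[OF l openin_lcs_translate[OF l S(1)]] A(4) by auto
    then have "ell = (\<lambda>d. 0)"
    proof (rule linear_nonpos_on_algebraic_interior[OF ell(1)])
      show "ell d \<le> 0" if "d \<in> {d. x0 + d \<in> S}" for d using nonpos that by simp
      show "0 \<le> ell d1" using A_nonneg[OF A(3)] \<open>q = 0\<close> by simp
    qed
    then show False using ell(3) \<open>q = 0\<close> by simp
  qed
  define n where "n = inverse q *\<^sub>R ell"
  have "n \<in> dual \<tau>" unfolding n_def by (rule dual_scaleR) fact
  moreover have "n y \<le> n x0" if "y \<in> S" for y
    using nonpos[of "y - x0"] that \<open>0 < q\<close> by (simp add: n_def linear_diff[OF ell(1)] divide_right_mono)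
  moreover have "- n d \<le> r" if "(d, r) \<in> A" for d r
    using A_nonneg[OF that] \<open>0 < q\<close> by (simp add: n_def field_simps)
  ultimately show ?thesis using that by blast
qed

lemma normal_cone_closure_if_max:
  assumes "lcs \<tau>" "n \<in> dual \<tau>" "x0 \<in> \<tau> closure_of V" "\<And>y. y \<in> V \<Longrightarrow> n y \<le> n x0"
  shows "(x0, n) \<in> normal_cone \<tau> (\<tau> closure_of V)"
proof -
  have "n y \<le> n x0" if "y \<in> \<tau> closure_of V" for y
    using le_on_closure_of[OF dual_continuous[OF assms(2)] assms(4) that] .
  then show ?thesis using assms(2,3) by (simp add: normal_cone_def linear_diff[OF dual_linear[OF assms(2)]])
qed

text \<open>\<open>fitz_slack \<tau> R x0 x0s\<close> is the strict epigraph of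
  \<open>d \<mapsto> inf\<^sub>y\<^sub>s (fitz R (x0 + d, ys) - ys x0 - x0s d)\<close>.\<close>

definition fitz_slack :: "'a::real_vector topology \<Rightarrow> ('a \<times> ('a \<Rightarrow> real)) set \<Rightarrow> 'a \<Rightarrow> ('a \<Rightarrow> real) \<Rightarrow> ('a \<times> real) set" where
  "fitz_slack \<tau> R x0 x0s = {(d, r). \<exists>ys\<in>dual \<tau>. fitz R (x0 + d, ys) < ereal (r + ys x0 + x0s d)}"

lemma mem_fitz_slack:
  "(d, r) \<in> fitz_slack \<tau> R x0 x0s \<longleftrightarrow> (\<exists>ys\<in>dual \<tau>. fitz R (x0 + d, ys) < ereal (r + ys x0 + x0s d))"
  by (simp add: fitz_slack_def)

lemma convex_fitz_slack:
  assumes R: "operator \<tau> R" and lin: "linear x0s"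
  shows "convex (fitz_slack \<tau> R x0 x0s)"
proof (rule convexI)
  fix p1 p2 :: "'a \<times> real" and u v :: real
  assume "p1 \<in> fitz_slack \<tau> R x0 x0s" "p2 \<in> fitz_slack \<tau> R x0 x0s" and uv: "0 \<le> u" "0 \<le> v" "u + v = 1"
  then have v: "v = 1 - u" by simp
  obtain d1 r1 d2 r2 where p: "p1 = (d1, r1)" "p2 = (d2, r2)" by (cases p1, cases p2)
  then obtain ys1 ys2 where ys: "ys1 \<in> dual \<tau>" "ys2 \<in> dual \<tau>"
    "fitz R (x0 + d1, ys1) < ereal (r1 + ys1 x0 + x0s d1)"
    "fitz R (x0 + d2, ys2) < ereal (r2 + ys2 x0 + x0s d2)"
    using \<open>p1 \<in> _\<close> \<open>p2 \<in> _\<close> unfolding p mem_fitz_slack by blast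
  define ys where "ys = u *\<^sub>R ys1 + (1 - u) *\<^sub>R ys2"
  have "fitz R (u *\<^sub>R (x0 + d1, ys1) + (1 - u) *\<^sub>R (x0 + d2, ys2))
      < ereal (u * (r1 + ys1 x0 + x0s d1) + (1 - u) * (r2 + ys2 x0 + x0s d2))"
    using uv by (intro fitz_convex_strict[OF R ys(3,4)]) auto
  moreover have "u *\<^sub>R (x0 + d1, ys1) + (1 - u) *\<^sub>R (x0 + d2, ys2)
      = (x0 + (u *\<^sub>R d1 + (1 - u) *\<^sub>R d2), ys)"
    by (simp add: ys_def algebra_simps)
  moreover have "u * (r1 + ys1 x0 + x0s d1) + (1 - u) * (r2 + ys2 x0 + x0s d2)
      = (u * r1 + (1 - u) * r2) + ys x0 + x0s (u *\<^sub>R d1 + (1 - u) *\<^sub>R d2)"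
    using lin by (simp add: ys_def linear_add linear_diff linear_scale algebra_simps)
  moreover have "ys \<in> dual \<tau>" using ys(1,2) by (simp add: ys_def dual_add dual_scaleR)
  ultimately have "(u *\<^sub>R d1 + (1 - u) *\<^sub>R d2, u * r1 + (1 - u) * r2) \<in> fitz_slack \<tau> R x0 x0s"
    unfolding mem_fitz_slack by auto
  then show "u *\<^sub>R p1 + v *\<^sub>R p2 \<in> fitz_slack \<tau> R x0 x0s" by (simp add: p v)
qed

context NI_monotone
begin

lemma fitz_slack_nonneg:
  assumes x0: "x0 \<in> \<tau> closure_of V" "x0s \<in> dual \<tau>" "fitz R (x0, x0s) \<le> ereal (x0s x0)"
  shows "\<forall>(d, r) \<in> fitz_slack \<tau> R x0 x0s. x0 + d \<in> V \<longrightarrow> 0 \<le> r"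
proof (clarify)
  fix d r assume "(d, r) \<in> fitz_slack \<tau> R x0 x0s" "x0 + d \<in> V"
  then obtain ys where ys: "ys \<in> dual \<tau>" "fitz R (x0 + d, ys) < ereal (r + ys x0 + x0s d)"
    unfolding mem_fitz_slack by blast
  have "ereal (x0s (x0 + d) - x0s x0 + ys x0) \<le> fitz R (x0 + d, ys)"
    by (rule fitz_ge_at_cpl_point[OF x0 \<open>x0 + d \<in> V\<close> ys(1)])
  from le_less_trans[OF this ys(2)] show "0 \<le> r" by (simp add: linear_add[OF dual_linear[OF x0(2)]])
qed

lemma normal_functional_at_cpl_point:
  assumes x0: "x0 \<in> \<tau> closure_of V" "x0s \<in> dual \<tau>" "fitz R (x0, x0s) \<le> ereal (x0s x0)"
  obtains n where "n \<in> dual \<tau>" "\<And>y. y \<in> V \<Longrightarrow> n y \<le> n x0"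
    "\<And>y ys. ys \<in> dual \<tau> \<Longrightarrow> ereal (x0s y - x0s x0 + ys x0 - (n y - n x0)) \<le> fitz R (y, ys)"
proof -
  note lin = dual_linear[OF x0(2)]
  have zero_in: "\<forall>r>0. (0, r) \<in> fitz_slack \<tau> R x0 x0s"
  proof (intro allI impI)
    fix r :: real assume "0 < r"
    then have "ereal (x0s x0) < ereal (r + x0s x0 + x0s 0)" using linear_0[OF lin] by simp
    with le_less_trans[OF x0(3) this] show "(0, r) \<in> fitz_slack \<tau> R x0 x0s"
      unfolding mem_fitz_slack using x0(2) by auto
  qed
  obtain b bs where b: "(b, bs) \<in> R" using nonempty by auto
  then have "x0 + (b - x0) \<in> V" "bs \<in> dual \<tau>" using graph_over_V operator by (auto simp: operator_def)
  moreover have "fitz R (x0 + (b - x0), bs) < ereal ((bs b - bs x0 - x0s (b - x0) + 1) + bs x0 + x0s (b - x0))"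
    using le_less_trans[OF fitz_le_cpl_if_monotone[OF operator monotone b], of "ereal (bs b + 1)"] by simp
  then have "(b - x0, bs b - bs x0 - x0s (b - x0) + 1) \<in> fitz_slack \<tau> R x0 x0s"
    unfolding mem_fitz_slack using \<open>bs \<in> dual \<tau>\<close> by blast
  from supporting_functional_at_closure_point[OF lcs open_V convex_V x0(1)
      convex_fitz_slack[OF operator lin] zero_in this \<open>x0 + (b - x0) \<in> V\<close> fitz_slack_nonneg[OF x0]]
  obtain n where n: "n \<in> dual \<tau>" "\<And>y. y \<in> V \<Longrightarrow> n y \<le> n x0"
    and below: "\<And>d r. (d, r) \<in> fitz_slack \<tau> R x0 x0s \<Longrightarrow> - n d \<le> r"
    by blast
  have "ereal (x0s y - x0s x0 + ys x0 - (n y - n x0)) \<le> fitz R (y, ys)" if ys: "ys \<in> dual \<tau>" for y ys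
  proof (rule ccontr)
    assume "\<not> ?thesis"
    then have "fitz R (y, ys) < ereal (x0s y - x0s x0 + ys x0 - (n y - n x0))" by (simp add: not_le)
    then obtain p where p: "fitz R (y, ys) < ereal p" "ereal p < ereal (x0s y - x0s x0 + ys x0 - (n y - n x0))"
      using ereal_dense2 by blast
    have "(y - x0, p - ys x0 - x0s (y - x0)) \<in> fitz_slack \<tau> R x0 x0s"
      unfolding mem_fitz_slack using ys p(1) by (intro bexI[of _ ys]) simp_all
    from below[OF this] p(2) show False
      using linear_diff[OF lin] linear_diff[OF dual_linear[OF n(1)]] by simp
  qed
  then show ?thesis using that[OF n(1)] n(2) by blast
qed

end

section \<open>Lower semicontinuous convex functions on \<open>X \<times> X*\<close>\<close>

lemma sum_fun_apply: "(\<Sum>i\<in>E. F i) x = (\<Sum>i\<in>E. F i x)"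
  by (induction E rule: infinite_finite_induct) auto

lemma powertop_real_open_box:
  assumes "openin (powertop_real UNIV) T" "c \<in> T"
  obtains E e where "finite E" "0 < e" "\<And>xs. (\<forall>i\<in>E. \<bar>xs i - c i\<bar> < e) \<Longrightarrow> xs \<in> T"
proof -
  obtain P where P: "finite {i. P i \<noteq> UNIV}" "\<And>i. open (P i)" "c \<in> Pi\<^sub>E UNIV P" "Pi\<^sub>E UNIV P \<subseteq> T"
    using assms unfolding openin_product_topology_alt by auto
  define E where "E = {i. P i \<noteq> UNIV}"
  have "\<exists>d>0. ball (c i) d \<subseteq> P i" for i
  proof -
    have "c i \<in> P i" using P(3) by (simp add: PiE_iff)
    then show ?thesis using open_contains_ball[THEN iffD1, OF P(2)[of i]] by blast
  qed
  then obtain d where d: "\<And>i. 0 < d i" "\<And>i. ball (c i) (d i) \<subseteq> P i" by metis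
  define e where "e = Min (insert 1 (d ` E))"
  have "finite E" using P(1) by (simp add: E_def)
  then have e: "0 < e" "\<And>i. i \<in> E \<Longrightarrow> e \<le> d i" using d(1) by (auto simp: e_def)
  have "xs \<in> T" if "\<forall>i\<in>E. \<bar>xs i - c i\<bar> < e" for xs
  proof -
    have "xs i \<in> P i" for i
    proof (cases "i \<in> E")
      case True
      then have "xs i \<in> ball (c i) (d i)" using that e(2) by (fastforce simp: dist_real_def abs_minus_commute)
      then show ?thesis using d(2) by blast
    qed (simp add: E_def)
    then show ?thesis using P(4) by (auto simp: PiE_iff)
  qed
  then show ?thesis using that \<open>finite E\<close> e(1) by blast
qed

definition coord_box :: "'i set \<Rightarrow> real \<Rightarrow> ('i \<Rightarrow> real) \<Rightarrow> ('i \<Rightarrow> real) set" where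
  "coord_box E e c = {xs. \<forall>i\<in>E. \<bar>xs i - c i\<bar> < e}"

lemma convex_coord_box: "convex (coord_box E e c)"
proof (rule convexI)
  fix xs ys :: "'a \<Rightarrow> real" and u v :: real
  assume "xs \<in> coord_box E e c" "ys \<in> coord_box E e c" and uv: "0 \<le> u" "0 \<le> v" "u + v = 1"
  then have "v = 1 - u" by simp
  have "\<bar>u * xs i + v * ys i - c i\<bar> < e" if "i \<in> E" for i
  proof -
    have "\<bar>u * xs i + v * ys i - c i\<bar> = \<bar>u * (xs i - c i) + v * (ys i - c i)\<bar>"
      using uv by (simp add: algebra_simps flip: distrib_right)
    also have "\<dots> \<le> u * \<bar>xs i - c i\<bar> + v * \<bar>ys i - c i\<bar>"
      using uv by (simp add: abs_triangle_ineq[THEN order_trans] abs_mult)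
    also have "\<dots> < u * e + (1 - u) * e"
      unfolding \<open>v = 1 - u\<close> using uv that \<open>xs \<in> coord_box E e c\<close> \<open>ys \<in> coord_box E e c\<close>
      by (intro convex_comb_strict_less) (auto simp: coord_box_def)
    also have "\<dots> = e" by (simp add: algebra_simps)
    finally show ?thesis .
  qed
  then show "u *\<^sub>R xs + v *\<^sub>R ys \<in> coord_box E e c" by (simp add: coord_box_def)
qed

lemma coord_box_algebraic_interior:
  assumes "finite E" "0 < e"
  shows "c \<in> algebraic_interior (coord_box E e c)"
  unfolding algebraic_interior_def
proof (intro CollectI allI)
  fix v :: "'a \<Rightarrow> real"
  define M where "M = (\<Sum>i\<in>E. \<bar>v i\<bar>)"
  have M: "0 \<le> M" "\<And>i. i \<in> E \<Longrightarrow> \<bar>v i\<bar> \<le> M"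
    using assms(1) by (auto simp: M_def sum_nonneg intro: member_le_sum)
  have "c + s *\<^sub>R v \<in> coord_box E e c" if "0 \<le> s" "s \<le> e / (M + 1)" for s
  proof -
    have "\<bar>s * v i\<bar> < e" if "i \<in> E" for i
    proof -
      have "\<bar>s * v i\<bar> = s * \<bar>v i\<bar>" using \<open>0 \<le> s\<close> by (simp add: abs_mult)
      also have "\<dots> \<le> e / (M + 1) * M"
        using M(2)[OF that] \<open>0 \<le> s\<close> \<open>s \<le> e / (M + 1)\<close> by (intro mult_mono) auto
      also have "\<dots> < e" using assms(2) M(1) by (simp add: field_simps)
      finally show ?thesis .
    qed
    then show ?thesis by (simp add: coord_box_def)
  qed
  moreover have "0 < e / (M + 1)" using assms(2) M(1) by simp
  ultimately show "\<exists>e'>0. \<forall>s. 0 \<le> s \<and> s \<le> e' \<longrightarrow> c + s *\<^sub>R v \<in> coord_box E e c" by blast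
qed

lemma linear_eval_if_bounded_on_box:
  fixes g :: "('i::real_vector \<Rightarrow> real) \<Rightarrow> real"
  assumes g: "linear g" and E: "finite E" and bounded: "\<And>xs. xs \<in> coord_box E e c \<Longrightarrow> g xs \<le> M"
    and "0 < e"
  obtains a where "\<And>xs :: 'i \<Rightarrow> real. linear xs \<Longrightarrow> g xs = xs a"
proof -
  have vanish: "g ds = 0" if "\<forall>i\<in>E. ds i = 0" for ds
  proof -
    have "g c + k * g ds \<le> M" for k
    proof -
      have "c + k *\<^sub>R ds \<in> coord_box E e c" using that \<open>0 < e\<close> by (simp add: coord_box_def)
      from bounded[OF this] show ?thesis by (simp add: linear_add[OF g] linear_scale[OF g])
    qed
    show ?thesis
    proof (rule ccontr)
      assume "g ds \<noteq> 0"
      then have "g c + (\<bar>M - g c\<bar> + 1) \<le> M"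
        using \<open>\<And>k. g c + k * g ds \<le> M\<close>[of "(\<bar>M - g c\<bar> + 1) / g ds"] by simp
      then show False by linarith
    qed
  qed
  define \<delta> where "\<delta> i = (\<lambda>j. if j = i then 1 else 0 :: real)" for i :: 'i
  define a where "a = (\<Sum>i\<in>E. g (\<delta> i) *\<^sub>R i)"
  have "g xs = xs a" if "linear xs" for xs
  proof -
    define D where "D = (\<Sum>i\<in>E. xs i *\<^sub>R \<delta> i)"
    have "(\<Sum>i\<in>E. xs i * \<delta> i k) = (if k \<in> E then xs k else 0)" for k
      using E by (simp add: \<delta>_def if_distrib[of "(*) _"] sum.delta' cong: if_cong)
    then have "D k = (if k \<in> E then xs k else 0)" for k by (simp add: D_def sum_fun_apply)
    then have "g (xs - D) = 0" by (intro vanish) simp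
    then have "g xs = g D" using linear_diff[OF g] by simp
    also have "\<dots> = (\<Sum>i\<in>E. xs i * g (\<delta> i))" by (simp add: D_def linear_sum[OF g] linear_scale[OF g])
    also have "\<dots> = xs a" by (simp add: a_def linear_sum[OF that] linear_scale[OF that] mult.commute)
    finally show ?thesis .
  qed
  then show ?thesis using that by blast
qed

lemma topspace_Ztop: "lcs \<tau> \<Longrightarrow> topspace (Ztop \<tau>) = UNIV \<times> dual \<tau>"
  by (simp add: Ztop_def wstar_def lcs_topspace)

lemma lsc_on_Z_box_neighbourhood:
  assumes l: "lcs \<tau>" and h: "lsc_on_Z \<tau> h" and x0s: "x0s \<in> dual \<tau>" and t: "ereal t < h (x0, x0s)"
  obtains W E e where "openin \<tau> W" "convex W" "x0 \<in> W" "finite E" "0 < e"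
    "\<And>x xs. x \<in> W \<Longrightarrow> xs \<in> dual \<tau> \<Longrightarrow> xs \<in> coord_box E e x0s \<Longrightarrow> ereal t < h (x, xs)"
proof -
  define G where "G = topspace (Ztop \<tau>) - {z \<in> topspace (Ztop \<tau>). h z \<le> ereal t}"
  have "openin (prod_topology \<tau> (wstar \<tau>)) G"
    using h unfolding lsc_on_Z_def closedin_def G_def by (simp add: Ztop_def)
  moreover have "(x0, x0s) \<in> G" using t x0s by (simp add: G_def topspace_Ztop[OF l])
  ultimately obtain U W' where U: "openin \<tau> U" "openin (wstar \<tau>) W'" "x0 \<in> U" "x0s \<in> W'" "U \<times> W' \<subseteq> G"
    unfolding openin_prod_topology_alt by meson
  from U(2) obtain T where T: "openin (powertop_real UNIV) T" "W' = T \<inter> dual \<tau>"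
    unfolding wstar_def openin_subtopology by blast
  have "x0s \<in> T" using U(4) T(2) by blast
  obtain E e where E: "finite E" "0 < e" "\<And>xs. xs \<in> coord_box E e x0s \<Longrightarrow> xs \<in> T"
  proof (rule powertop_real_open_box[OF T(1) \<open>x0s \<in> T\<close>])
    fix E e assume "finite E" "0 < e" "\<And>xs. \<forall>i\<in>E. \<bar>xs i - x0s i\<bar> < e \<Longrightarrow> xs \<in> T"
    then show thesis using that unfolding coord_box_def by blast
  qed
  have "\<forall>U x. openin \<tau> U \<and> x \<in> U \<longrightarrow> (\<exists>W. openin \<tau> W \<and> convex W \<and> x \<in> W \<and> W \<subseteq> U)"
    using l by (simp add: lcs_def)
  with U(1,3) obtain W where W: "openin \<tau> W" "convex W" "x0 \<in> W" "W \<subseteq> U" by blast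
  have "ereal t < h (x, xs)" if "x \<in> W" "xs \<in> dual \<tau>" "xs \<in> coord_box E e x0s" for x xs
  proof -
    have "x \<in> U" "xs \<in> W'" using that W(4) E(3) T(2) by auto
    then have "(x, xs) \<in> G" using U(5) by blast
    then show ?thesis by (simp add: G_def not_le)
  qed
  then show ?thesis using that[OF W(1-3) E(1,2)] by blast
qed

lemma convex_strict_epigraph_Z:
  assumes convex: "convex_on_Z \<tau> h" and proper: "proper_on \<tau> h"
  shows "convex {(z, r). z \<in> UNIV \<times> dual \<tau> \<and> h z < ereal r}"
proof (rule convexI)
  fix p1 p2 :: "('a \<times> ('a \<Rightarrow> real)) \<times> real" and u v :: real
  assume "p1 \<in> {(z, r). z \<in> UNIV \<times> dual \<tau> \<and> h z < ereal r}" "p2 \<in> {(z, r). z \<in> UNIV \<times> dual \<tau> \<and> h z < ereal r}"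
    and uv: "0 \<le> u" "0 \<le> v" "u + v = 1"
  then obtain x1 xs1 r1 x2 xs2 r2 where p: "p1 = ((x1, xs1), r1)" "p2 = ((x2, xs2), r2)"
    "xs1 \<in> dual \<tau>" "h (x1, xs1) < ereal r1" "xs2 \<in> dual \<tau>" "h (x2, xs2) < ereal r2"
    by (cases p1, cases p2) auto
  obtain c1 c2 where c: "h (x1, xs1) = ereal c1" "h (x2, xs2) = ereal c2"
    using p(3-6) proper unfolding proper_on_def by (metis ereal_cases less_ereal.simps(2) mem_Sigma_iff UNIV_I)
  have "h (u *\<^sub>R x1 + (1 - u) *\<^sub>R x2, \<lambda>a. u * xs1 a + (1 - u) * xs2 a)
      \<le> ereal u * h (x1, xs1) + ereal (1 - u) * h (x2, xs2)"
    using convex p(3,5) uv unfolding convex_on_Z_def by auto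
  also have "\<dots> < ereal (u * r1 + (1 - u) * r2)"
    using convex_comb_strict_less[of c1 r1 c2 r2 u] p(4,6) c uv by simp
  finally have "h (u *\<^sub>R x1 + (1 - u) *\<^sub>R x2, u *\<^sub>R xs1 + (1 - u) *\<^sub>R xs2) < ereal (u * r1 + (1 - u) * r2)"
    by (simp add: scaleR_fun_def plus_fun_def)
  moreover have "u *\<^sub>R xs1 + (1 - u) *\<^sub>R xs2 \<in> dual \<tau>" using p(3,5) by (simp add: dual_add dual_scaleR)
  moreover have "u *\<^sub>R p1 + v *\<^sub>R p2 = ((u *\<^sub>R x1 + (1 - u) *\<^sub>R x2, u *\<^sub>R xs1 + (1 - u) *\<^sub>R xs2), u * r1 + (1 - u) * r2)"
    using uv by (simp add: p)
  ultimately show "u *\<^sub>R p1 + v *\<^sub>R p2 \<in> {(z, r). z \<in> UNIV \<times> dual \<tau> \<and> h z < ereal r}" by simp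
qed

lemma linear_triple_split:
  fixes L :: "('b::real_vector \<times> 'c::real_vector) \<times> real \<Rightarrow> real"
  assumes "linear L"
  shows "L ((x, y), r) = L ((x, 0), 0) + L ((0, y), 0) + r * L ((0, 0), 1)"
    and "linear (\<lambda>x. L ((x, 0), 0))" and "linear (\<lambda>y. L ((0, y), 0))"
proof -
  note outer = linear_pair_split[OF assms] and inner = linear_pair_split[OF linear_pair_split(2)[OF assms]]
  show "L ((x, y), r) = L ((x, 0), 0) + L ((0, y), 0) + r * L ((0, 0), 1)"
    using outer(1)[of "(x, y)" r] inner(1)[of x y] linear_real_apply[OF outer(3), of r]
    by (simp add: zero_prod_def)
  show "linear (\<lambda>x. L ((x, 0), 0))" "linear (\<lambda>y. L ((0, y), 0))" using inner(2,3) by simp_all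
qed

lemma lsc_convex_epigraph_separation:
  assumes l: "lcs \<tau>" and h: "convex_on_Z \<tau> h" "lsc_on_Z \<tau> h" "proper_on \<tau> h"
    and x0s: "x0s \<in> dual \<tau>" and below: "ereal \<beta> < h (x0, x0s)"
  obtains L :: "('a::real_vector \<times> ('a \<Rightarrow> real)) \<times> real \<Rightarrow> real" and \<delta> M W E e t0
  where "linear L" "0 < \<delta>" "openin \<tau> W" "x0 \<in> W" "finite E" "0 < e" "\<beta> < t0"
    "\<And>x xs r. xs \<in> dual \<tau> \<Longrightarrow> h (x, xs) < ereal r \<Longrightarrow> L ((x0, x0s), \<beta>) + \<delta> \<le> L ((x, xs), r)"
    "\<And>x xs r. x \<in> W \<Longrightarrow> xs \<in> coord_box E e x0s \<Longrightarrow> r < t0 \<Longrightarrow> L ((x, xs), r) \<le> M"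
proof -
  obtain t0 where t0: "\<beta> < t0" "ereal t0 < h (x0, x0s)" using ereal_dense2[OF below] by auto
  obtain W E e where W: "openin \<tau> W" "convex W" "x0 \<in> W" "finite E" "0 < e"
    and above: "\<And>x xs. x \<in> W \<Longrightarrow> xs \<in> dual \<tau> \<Longrightarrow> xs \<in> coord_box E e x0s \<Longrightarrow> ereal t0 < h (x, xs)"
    by (rule lsc_on_Z_box_neighbourhood[OF l h(2) x0s t0(2)]) (rule that)
  define A where "A = {(z, r). z \<in> UNIV \<times> dual \<tau> \<and> h z < ereal r}"
  define B where "B = (W \<times> coord_box E e x0s) \<times> {..<t0}"
  define b0 where "b0 = ((x0, x0s), \<beta>)"
  obtain z c where "z \<in> UNIV \<times> dual \<tau>" "h z = ereal c"
    using h(3) unfolding proper_on_def by (metis ereal_cases)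
  then have a0: "(z, c + 1) \<in> A" by (simp add: A_def)
  have convex_A: "convex A" unfolding A_def by (rule convex_strict_epigraph_Z[OF h(1,3)])
  have convex_B: "convex B" unfolding B_def using W(2) by (intro convex_Times convex_coord_box) auto
  have interior: "b0 \<in> algebraic_interior B"
    unfolding B_def b0_def using openin_lcs_subset_algebraic_interior[OF l W(1)] W(3-5) t0(1)
    by (intro algebraic_interior_Times coord_box_algebraic_interior lessThan_algebraic_interior) auto
  have disjoint: "A \<inter> B = {}"
  proof (intro equals0I)
    fix p assume "p \<in> A \<inter> B"
    moreover obtain x xs r where "p = ((x, xs), r)" by (cases p) auto
    ultimately have "x \<in> W" "xs \<in> dual \<tau>" "xs \<in> coord_box E e x0s" "h (x, xs) < ereal r" "r < t0"
      by (auto simp: A_def B_def)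
    then have "ereal t0 < ereal r" using above[of x xs] less_trans by blast
    then show False using \<open>r < t0\<close> by simp
  qed
  obtain L :: "('a \<times> ('a \<Rightarrow> real)) \<times> real \<Rightarrow> real" and \<delta> where L: "linear L" "0 < \<delta>"
    "\<And>a. a \<in> A \<Longrightarrow> L b0 + \<delta> \<le> L a" "\<And>a b. a \<in> A \<Longrightarrow> b \<in> B \<Longrightarrow> L b \<le> L a"
    by (rule separation_algebraic_interior_strict[OF convex_A a0 convex_B interior disjoint]) (rule that)
  show ?thesis
  proof (rule that[OF L(1,2) W(1,3-5) t0(1)])
    show "L ((x0, x0s), \<beta>) + \<delta> \<le> L ((x, xs), r)" if "xs \<in> dual \<tau>" "h (x, xs) < ereal r" for x xs r
      using L(3)[of "((x, xs), r)"] that by (simp add: A_def b0_def)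
    show "L ((x, xs), r) \<le> L (z, c + 1)" if "x \<in> W" "xs \<in> coord_box E e x0s" "r < t0" for x xs r
      using L(4)[OF a0, of "((x, xs), r)"] that by (simp add: B_def)
  qed
qed

lemma lsc_convex_affine_separation:
  assumes l: "lcs \<tau>" and h: "convex_on_Z \<tau> h" "lsc_on_Z \<tau> h" "proper_on \<tau> h"
    and x0s: "x0s \<in> dual \<tau>" and below: "ereal \<beta> < h (x0, x0s)"
  obtains f a q \<delta> where "f \<in> dual \<tau>" "0 \<le> q" "0 < \<delta>"
    "\<And>x xs r. xs \<in> dual \<tau> \<Longrightarrow> h (x, xs) < ereal r \<Longrightarrow> f x0 + x0s a + q * \<beta> + \<delta> \<le> f x + xs a + q * r"
proof -
  obtain L :: "('a \<times> ('a \<Rightarrow> real)) \<times> real \<Rightarrow> real" and \<delta> M W E e t0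
    where L: "linear L" "0 < \<delta>" and W: "openin \<tau> W" "x0 \<in> W" "finite E" "0 < e" "\<beta> < t0"
      and strict: "\<And>x xs r. xs \<in> dual \<tau> \<Longrightarrow> h (x, xs) < ereal r \<Longrightarrow> L ((x0, x0s), \<beta>) + \<delta> \<le> L ((x, xs), r)"
      and bounded: "\<And>x xs r. x \<in> W \<Longrightarrow> xs \<in> coord_box E e x0s \<Longrightarrow> r < t0 \<Longrightarrow> L ((x, xs), r) \<le> M"
    by (rule lsc_convex_epigraph_separation[OF l h x0s below]) (rule that)
  define f where "f x = L ((x, 0), 0)" for x
  define g where "g xs = L ((0, xs), 0)" for xs
  define q where "q = L ((0, 0), 1)"
  have L_eq: "L ((x, xs), r) = f x + g xs + q * r" for x xs r
    using linear_triple_split(1)[OF L(1), of x xs r] by (simp add: f_def g_def q_def mult.commute)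
  have lin: "linear f" "linear g" unfolding f_def g_def using linear_triple_split(2,3)[OF L(1)] .
  have x0s_box: "x0s \<in> coord_box E e x0s" using W(4) by (simp add: coord_box_def)
  have "f x0 + g x0s + q * t0 - M \<le> q * s" if "0 < s" for s
    using bounded[OF W(2) x0s_box, of "t0 - s"] that by (simp add: L_eq algebra_simps)
  then have "0 \<le> q" using le_pos_multiples_nonneg_nonpos(1) by blast
  have "f x \<le> M - g x0s - q * \<beta>" if "x \<in> W" for x
    using bounded[OF that x0s_box W(5)] by (simp add: L_eq)
  then have "f \<in> dual \<tau>" by (rule linear_dual_if_bounded_above[OF l lin(1) W(1,2)])
  have "g xs \<le> M - f x0 - q * \<beta>" if "xs \<in> coord_box E e x0s" for xs
    using bounded[OF W(2) that W(5)] by (simp add: L_eq)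
  \<comment> \<open>Weak-star neighbourhoods only constrain finitely many coordinates, so \<open>g\<close> is an evaluation.\<close>
  from linear_eval_if_bounded_on_box[OF lin(2) W(3) this W(4)]
  obtain a where a: "\<And>xs. linear xs \<Longrightarrow> g xs = xs a" by blast
  show ?thesis
  proof (rule that[OF \<open>f \<in> dual \<tau>\<close> \<open>0 \<le> q\<close> L(2)])
    fix x xs r assume "xs \<in> dual \<tau>" "h (x, xs) < ereal r"
    from strict[OF this] show "f x0 + x0s a + q * \<beta> + \<delta> \<le> f x + xs a + q * r"
      using a[OF dual_linear[OF x0s]] a[OF dual_linear[OF \<open>xs \<in> dual \<tau>\<close>]] by (simp add: L_eq)
  qed
qed

section \<open>Representable operators\<close>

lemma fitz_le_if_affine_minorant_pos:
  assumes R: "operator \<tau> R" and q: "0 < q"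
    and minorant: "\<And>u us. (u, us) \<in> R \<Longrightarrow> K \<le> f u + us a + q * us u"
  shows "fitz R ((- inverse q) *\<^sub>R a, (- inverse q) *\<^sub>R f) \<le> ereal (- K / q)"
  unfolding fitz_le_iff
proof (intro ballI, clarify)
  fix u us assume u: "(u, us) \<in> R"
  have "us ((- inverse q) *\<^sub>R a) = - inverse q * us a"
    by (simp only: linear_scale[OF operator_linear[OF R u]] real_scaleR_def)
  then have "us ((- inverse q) *\<^sub>R a) + (- inverse q) * f u - us u = - (f u + us a + q * us u) / q"
    using q by (simp add: field_simps)
  also have "\<dots> \<le> - K / q"
    using divide_right_mono[of "- (f u + us a + q * us u)" "- K" q] minorant[OF u] q by simp
  finally show "us ((- inverse q) *\<^sub>R a) + ((- inverse q) *\<^sub>R f) u - us u \<le> - K / q" by simp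
qed

lemma fitz_le_if_affine_minorant_zero:
  assumes R: "operator \<tau> R" "monotone_op R" "(b, bs) \<in> R" and s: "0 \<le> s"
    and minorant: "\<And>u us. (u, us) \<in> R \<Longrightarrow> K \<le> f u + us a"
  shows "fitz R (b - s *\<^sub>R a, bs - s *\<^sub>R f) \<le> ereal (bs b - s * K)"
  unfolding fitz_le_iff
proof (intro ballI, clarify)
  fix u us assume u: "(u, us) \<in> R"
  have "us b + bs u - us u \<le> bs b"
    using fitz_le_cpl_if_monotone[OF R] u unfolding fitz_le_iff by blast
  moreover have "s * K \<le> s * (f u + us a)" using minorant[OF u] s by (rule mult_left_mono)
  ultimately show "us (b - s *\<^sub>R a) + (bs - s *\<^sub>R f) u - us u \<le> bs b - s * K"
    using operator_linear[OF R(1) u] by (simp add: linear_diff linear_scale algebra_simps)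
qed

lemma affine_minorant_bound_pos:
  assumes R: "operator \<tau> R" and q: "0 < q" and f: "f \<in> dual \<tau>" and x0s: "x0s \<in> dual \<tau>"
    and R_minorant: "\<And>u us. (u, us) \<in> R \<Longrightarrow> K \<le> f u + us a + q * us u"
    and minorant: "\<And>y ys. ys \<in> dual \<tau> \<Longrightarrow> ereal (x0s y + ys x0 - \<beta>) \<le> fitz R (y, ys)"
  shows "K \<le> f x0 + x0s a + q * \<beta>"
proof -
  have "ereal (x0s ((- inverse q) *\<^sub>R a) + ((- inverse q) *\<^sub>R f) x0 - \<beta>)
      \<le> fitz R ((- inverse q) *\<^sub>R a, (- inverse q) *\<^sub>R f)"
    by (rule minorant[OF dual_scaleR[OF f]])
  also have "\<dots> \<le> ereal (- K / q)" by (rule fitz_le_if_affine_minorant_pos[OF R q R_minorant])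
  finally have "x0s ((- inverse q) *\<^sub>R a) - inverse q * f x0 - \<beta> \<le> - K / q" by simp
  moreover have "x0s ((- inverse q) *\<^sub>R a) = - inverse q * x0s a"
    by (simp only: linear_scale[OF dual_linear[OF x0s]] real_scaleR_def)
  ultimately have "- inverse q * x0s a - inverse q * f x0 - \<beta> \<le> - K / q" by simp
  from mult_left_mono[OF this, of q] q
  have "q * (- inverse q * x0s a - inverse q * f x0 - \<beta>) \<le> q * (- K / q)" by simp
  moreover have "q * (- inverse q * x0s a - inverse q * f x0 - \<beta>) = - x0s a - f x0 - q * \<beta>"
    using q by (simp add: field_simps)
  ultimately show ?thesis using q by simp
qed

lemma affine_minorant_bound_zero:
  assumes R: "operator \<tau> R" "monotone_op R" "R \<noteq> {}" and f: "f \<in> dual \<tau>" and x0s: "x0s \<in> dual \<tau>"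
    and R_minorant: "\<And>u us. (u, us) \<in> R \<Longrightarrow> K \<le> f u + us a"
    and minorant: "\<And>y ys. ys \<in> dual \<tau> \<Longrightarrow> ereal (x0s y + ys x0 - \<beta>) \<le> fitz R (y, ys)"
  shows "K \<le> f x0 + x0s a"
proof -
  obtain b bs where b: "(b, bs) \<in> R" using R(3) by auto
  have "bs \<in> dual \<tau>" using R(1) b by (auto simp: operator_def)
  have "x0s b + bs x0 - \<beta> - bs b \<le> (f x0 + x0s a - K) * s" if "0 < s" for s
  proof -
    have "bs - s *\<^sub>R f \<in> dual \<tau>"
      using dual_add[OF \<open>bs \<in> dual \<tau>\<close> dual_scaleR[OF f, of "- s"]] by simp
    then have "ereal (x0s (b - s *\<^sub>R a) + (bs - s *\<^sub>R f) x0 - \<beta>) \<le> fitz R (b - s *\<^sub>R a, bs - s *\<^sub>R f)"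
      by (rule minorant)
    also have "\<dots> \<le> ereal (bs b - s * K)"
      using R_minorant that by (intro fitz_le_if_affine_minorant_zero[OF R(1,2) b]) simp_all
    finally have "x0s (b - s *\<^sub>R a) + (bs - s *\<^sub>R f) x0 - \<beta> \<le> bs b - s * K" by simp
    then show ?thesis using dual_linear[OF x0s] by (simp add: linear_diff linear_scale algebra_simps)
  qed
  then have "0 \<le> f x0 + x0s a - K" by (rule le_pos_multiples_nonneg_nonpos(1))
  then show ?thesis by simp
qed

text \<open>In conjugate terms: a lower semicontinuous convex \<open>h\<close> with \<open>h \<le> c\<close> on the graph of \<open>R\<close>
  lies below the transposed conjugate of \<open>fitz R\<close>.\<close>

lemma le_if_fitz_affine_minorant:
  assumes l: "lcs \<tau>" and h: "convex_on_Z \<tau> h" "lsc_on_Z \<tau> h" "proper_on \<tau> h"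
    and R: "operator \<tau> R" "monotone_op R" "R \<noteq> {}" and h_R: "\<And>u us. (u, us) \<in> R \<Longrightarrow> h (u, us) \<le> ereal (us u)"
    and x0s: "x0s \<in> dual \<tau>"
    and minorant: "\<And>y ys. ys \<in> dual \<tau> \<Longrightarrow> ereal (x0s y + ys x0 - \<beta>) \<le> fitz R (y, ys)"
  shows "h (x0, x0s) \<le> ereal \<beta>"
proof (rule ccontr)
  assume "\<not> ?thesis"
  then obtain f a q \<delta> where f: "f \<in> dual \<tau>" "0 \<le> q" "0 < \<delta>"
    and sep: "\<And>x xs r. xs \<in> dual \<tau> \<Longrightarrow> h (x, xs) < ereal r \<Longrightarrow> f x0 + x0s a + q * \<beta> + \<delta> \<le> f x + xs a + q * r"
    using lsc_convex_affine_separation[OF l h x0s] by (metis not_le)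
  \<comment> \<open>On the graph of \<open>R\<close> we have \<open>h (u, us) \<le> us u\<close>, so \<open>sep\<close> applies to every \<open>r > us u\<close>.\<close>
  have R_minorant: "f x0 + x0s a + q * \<beta> + \<delta> \<le> f u + us a + q * us u" if "(u, us) \<in> R" for u us
  proof (rule le_if_forall_neg)
    fix r :: real assume "r < 0"
    have "us \<in> dual \<tau>" using R(1) that by (auto simp: operator_def)
    moreover have "h (u, us) < ereal (us u - r)" using h_R[OF that] \<open>r < 0\<close> by (simp add: le_less_trans)
    ultimately show "f x0 + x0s a + q * \<beta> + \<delta> + q * r \<le> f u + us a + q * us u"
      using sep[of us u "us u - r"] by (simp add: algebra_simps)
  qed
  show False
  proof (cases "q = 0")
    case False
    then have "0 < q" using f(2) by simp
    from affine_minorant_bound_pos[OF R(1) this f(1) x0s R_minorant minorant] f(3) show False by simp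
  next
    case True
    then have "f x0 + x0s a + \<delta> \<le> f u + us a" if "(u, us) \<in> R" for u us
      using R_minorant[OF that] by simp
    then have "f x0 + x0s a + \<delta> \<le> f x0 + x0s a"
      by (rule affine_minorant_bound_zero[OF R f(1) x0s _ minorant])
    then show False using f(3) by simp
  qed
qed

lemma restr_mono: "V \<subseteq> S \<Longrightarrow> restr T V \<subseteq> restr T S"
  by (auto simp: restr_def)

lemma operator_restr: "operator \<tau> T \<Longrightarrow> operator \<tau> (restr T V)"
  by (auto simp: operator_def restr_def)

lemma op_sum_normal_cone_subset:
  assumes "operator \<tau> T"
  shows "op_sum T (normal_cone \<tau> C) \<subseteq> dom_op T \<times> dual \<tau>"
proof
  fix z assume "z \<in> op_sum T (normal_cone \<tau> C)"
  then obtain x u v where z: "z = (x, \<lambda>y. u y + v y)" "(x, u) \<in> T" "(x, v) \<in> normal_cone \<tau> C"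
    unfolding op_sum_def by blast
  have "u + v \<in> dual \<tau>"
    using z(2,3) assms by (intro dual_add) (auto simp: operator_def normal_cone_def)
  moreover have "x \<in> dom_op T" using z(2) by (force simp: dom_op_def)
  ultimately show "z \<in> dom_op T \<times> dual \<tau>" using z(1) by (simp add: plus_fun_def)
qed

locale NI_restriction =
  fixes \<tau> :: "'a::real_vector topology" and T :: "('a \<times> ('a \<Rightarrow> real)) set" and V :: "'a set"
  assumes lcs: "lcs \<tau>" and operator_T: "operator \<tau> T" and open_V: "openin \<tau> V" and convex_V: "convex V"
    and monotone_nonempty: "restr T V \<in> MX \<tau>" and NI_V: "NI \<tau> V T"

sublocale NI_restriction \<subseteq> NI_monotone \<tau> "restr T V" V
  using lcs open_V convex_V operator_restr[OF operator_T] monotone_nonempty NI_V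
  by unfold_locales (auto simp: restr_def MX_def NI_def cpl_def)

context NI_restriction
begin

lemma V_subset_closure: "V \<subseteq> \<tau> closure_of V"
  by (rule closure_of_subset) (simp add: lcs_topspace[OF lcs])

lemma NI_on_closure: "\<forall>z \<in> (\<tau> closure_of V) \<times> dual \<tau>. ereal (cpl z) \<le> fitz (restr T V) z"
  using fitz_ge_cpl_on_closure by (auto simp: cpl_def)

lemma NI_between:
  assumes "V \<subseteq> S" "S \<subseteq> \<tau> closure_of V"
  shows "NI \<tau> S T"
  unfolding NI_def
proof
  fix z assume "z \<in> S \<times> dual \<tau>"
  then obtain x xs where z: "z = (x, xs)" "x \<in> \<tau> closure_of V" "xs \<in> dual \<tau>" using assms(2) by auto
  then have "ereal (cpl z) \<le> fitz (restr T V) z" using fitz_ge_cpl_on_closure by (simp add: cpl_def)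
  also have "\<dots> \<le> fitz (restr T S) z" by (rule fitz_mono[OF restr_mono[OF assms(1)]])
  finally show "ereal (cpl z) \<le> fitz (restr T S) z" .
qed

lemma le_c_subset_op_sum_normal_cone:
  assumes "representable \<tau> (\<tau> closure_of V) T"
  shows "le_c \<tau> (fitz (restr T V)) \<inter> ((\<tau> closure_of V) \<times> dual \<tau>) \<subseteq> op_sum T (normal_cone \<tau> (\<tau> closure_of V))"
proof
  fix z assume z: "z \<in> le_c \<tau> (fitz (restr T V)) \<inter> ((\<tau> closure_of V) \<times> dual \<tau>)"
  obtain x0 x0s where zz: "z = (x0, x0s)" by (cases z)
  have x0: "x0 \<in> \<tau> closure_of V" "x0s \<in> dual \<tau>" "fitz (restr T V) (x0, x0s) \<le> ereal (x0s x0)"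
    using z by (auto simp: zz le_c_def cpl_def)
  obtain h where h: "proper_on \<tau> h" "convex_on_Z \<tau> h" "lsc_on_Z \<tau> h"
    "\<forall>z \<in> UNIV \<times> dual \<tau>. ereal (cpl z) \<le> h z"
    "{z \<in> (\<tau> closure_of V) \<times> dual \<tau>. h z = ereal (cpl z)} = restr T (\<tau> closure_of V)"
    using assms unfolding representable_def by blast
  obtain n where n: "n \<in> dual \<tau>" "\<And>y. y \<in> V \<Longrightarrow> n y \<le> n x0"
    and minorant: "\<And>y ys. ys \<in> dual \<tau> \<Longrightarrow> ereal (x0s y - x0s x0 + ys x0 - (n y - n x0)) \<le> fitz (restr T V) (y, ys)"
    by (rule normal_functional_at_cpl_point[OF x0]) (rule that)
  \<comment> \<open>\<open>x0s\<close> splits as \<open>w + n\<close> with \<open>(x0, w) \<in> T\<close> and \<open>n\<close> normal to the closure of \<open>V\<close> at \<open>x0\<close>.\<close>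
  define w where "w = x0s - n"
  have w: "w \<in> dual \<tau>" using dual_add[OF x0(2) dual_scaleR[OF n(1), of "- 1"]] by (simp add: w_def)
  have h_R: "h (u, us) \<le> ereal (us u)" if "(u, us) \<in> restr T V" for u us
  proof -
    have "us \<in> dual \<tau>" using that operator by (auto simp: operator_def)
    then have "(u, us) \<in> restr T (\<tau> closure_of V)" using that V_subset_closure by (auto simp: restr_def)
    then show ?thesis unfolding h(5)[symmetric] by (simp add: cpl_def)
  qed
  have "h (x0, w) \<le> ereal (w x0)"
  proof (rule le_if_fitz_affine_minorant[OF lcs h(2,3,1) operator monotone nonempty h_R w])
    fix y ys assume "ys \<in> dual \<tau>"
    from minorant[OF this] show "ereal (w y + ys x0 - w x0) \<le> fitz (restr T V) (y, ys)"
      by (simp add: w_def algebra_simps)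
  qed
  moreover have "ereal (w x0) \<le> h (x0, w)" using h(4) w by (simp add: cpl_def)
  ultimately have "(x0, w) \<in> {z \<in> (\<tau> closure_of V) \<times> dual \<tau>. h z = ereal (cpl z)}"
    using x0(1) w by (simp add: cpl_def)
  then have "(x0, w) \<in> T" unfolding h(5) by (simp add: restr_def)
  moreover have "(x0, n) \<in> normal_cone \<tau> (\<tau> closure_of V)"
    by (rule normal_cone_closure_if_max[OF lcs n(1) x0(1) n(2)])
  moreover have "x0s = (\<lambda>y. w y + n y)" by (simp add: w_def)
  ultimately show "z \<in> op_sum T (normal_cone \<tau> (\<tau> closure_of V))" unfolding zz op_sum_def by blast
qed

lemma locates_between:
  assumes "representable \<tau> (\<tau> closure_of V) T" "V \<subseteq> S" "S \<subseteq> \<tau> closure_of V"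
  shows "locates \<tau> S T"
  unfolding locates_def
proof
  fix x assume "x \<in> fst ` le_c \<tau> (fitz (restr T S)) \<inter> S"
  then obtain xs where xs: "(x, xs) \<in> le_c \<tau> (fitz (restr T S))" "x \<in> S" by force
  have "fitz (restr T V) (x, xs) \<le> fitz (restr T S) (x, xs)" by (rule fitz_mono[OF restr_mono[OF assms(2)]])
  then have "(x, xs) \<in> le_c \<tau> (fitz (restr T V)) \<inter> ((\<tau> closure_of V) \<times> dual \<tau>)"
    using xs assms(3) by (auto simp: le_c_def)
  then show "x \<in> dom_op T"
    using le_c_subset_op_sum_normal_cone[OF assms(1)] op_sum_normal_cone_subset[OF operator_T] by blast
qed

lemma identifies_between:
  assumes "representable \<tau> (\<tau> closure_of V) T" "V \<subseteq> S" "S \<subseteq> \<tau> closure_of V"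
  shows "identifies \<tau> S (op_sum T (normal_cone \<tau> (\<tau> closure_of V)))"
  unfolding identifies_def
proof
  let ?N = "op_sum T (normal_cone \<tau> (\<tau> closure_of V))"
  fix z assume z: "z \<in> le_c \<tau> (fitz (restr ?N S)) \<inter> (S \<times> dual \<tau>)"
  have "restr T V \<subseteq> restr ?N S"
  proof
    fix p assume p: "p \<in> restr T V"
    then obtain u us where "p = (u, us)" "(u, us) \<in> T" "u \<in> V" by (auto simp: restr_def)
    moreover have "(u, 0) \<in> normal_cone \<tau> (\<tau> closure_of V)"
      using \<open>u \<in> V\<close> V_subset_closure dual_zero by (auto simp: normal_cone_def)
    ultimately have "(u, \<lambda>y. us y + 0 y) \<in> ?N" unfolding op_sum_def by blast
    then show "p \<in> restr ?N S" using \<open>p = (u, us)\<close> \<open>u \<in> V\<close> assms(2) by (auto simp: restr_def)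
  qed
  then have "fitz (restr T V) z \<le> fitz (restr ?N S) z" by (rule fitz_mono)
  then have "z \<in> le_c \<tau> (fitz (restr T V)) \<inter> ((\<tau> closure_of V) \<times> dual \<tau>)"
    using z assms(3) by (auto simp: le_c_def)
  then show "z \<in> ?N" using le_c_subset_op_sum_normal_cone[OF assms(1)] by blast
qed

end

theorem proposition3p11:
  fixes \<tau> :: "'a::real_vector topology"
    and T :: "('a \<times> ('a \<Rightarrow> real)) set"
    and V :: "'a set"
  assumes "lcs \<tau>"
    and "operator \<tau> T"
    and "openin \<tau> V" and "convex V"
    and "dom_op T \<inter> V \<noteq> {}"
    and "restr T V \<in> MX \<tau>"
  shows "(NI \<tau> V T \<longrightarrow>
            (\<forall>z \<in> (\<tau> closure_of V) \<times> dual \<tau>. ereal (cpl z) \<le> fitz (restr T V) z)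
            \<and> (\<forall>S. V \<subseteq> S \<and> S \<subseteq> \<tau> closure_of V \<longrightarrow> NI \<tau> S T))
       \<and> (NI \<tau> V T \<and> representable \<tau> (\<tau> closure_of V) T \<longrightarrow>
            le_c \<tau> (fitz (restr T V)) \<inter> ((\<tau> closure_of V) \<times> dual \<tau>)
              \<subseteq> op_sum T (normal_cone \<tau> (\<tau> closure_of V))
            \<and> op_sum T (normal_cone \<tau> (\<tau> closure_of V)) \<subseteq> dom_op T \<times> dual \<tau>
            \<and> (\<forall>S. V \<subseteq> S \<and> S \<subseteq> \<tau> closure_of V \<longrightarrow>
                  locates \<tau> S T \<and> identifies \<tau> S (op_sum T (normal_cone \<tau> (\<tau> closure_of V)))))"
proof -
  have "NI_restriction \<tau> T V" if "NI \<tau> V T"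
    using assms that by (simp add: NI_restriction_def)
  note conclusions = this[THEN NI_restriction.NI_on_closure] this[THEN NI_restriction.NI_between]
    this[THEN NI_restriction.le_c_subset_op_sum_normal_cone]
    this[THEN NI_restriction.locates_between] this[THEN NI_restriction.identifies_between]
  show ?thesis
  proof (intro conjI impI allI; (elim conjE)?)
  qed (use conclusions op_sum_normal_cone_subset[OF assms(2)] in blast)+
qed

end
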